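(* Let $T:(0,1]\to(0,1]$ be defined by $Tx=2^n x-1$ for $x\in(2^{-n},2^{-n+1}]$, $n\in\mathbb{N}=\{1,2,\dots\}$. For $x\in(0,1]$ let $d_1(x)=\lceil -\log_2 x\rceil$ and $d_i(x)=d_1(T^{i-1}x)$ for $i\ge 2$, so that $x=\sum_{i\ge1}2^{-(d_1(x)+\cdots+d_i(x))}$. Define the Khintchine exponent $\gamma(x)=\lim_{n\to\infty}\frac1n\sum_{j=1}^n d_j(x)$ (when the limit exists) and, for $\xi\ge 1$, $E(\xi)=\{x\in(0,1]:\gamma(x)=\xi\}$ and $t(\xi)=\dim_H E(\xi)$. Then $\dim_H E(1)=0$ and for every $\xi>1$, $$t(\xi)=\dim_H E(\xi)=\frac{\frac{\log(\xi-1)}{\xi}+\log\xi-\log(\xi-1)}{\log 2}.$$ Moreover: (1) $t(2)=1$; (2) $\lim_{\xi\to1}t(\xi)=0$ and $\lim_{\xi\to\infty}t(\xi)=0$; (3) $t'(\xi)>0$ for $1<\xi<2$, $t'(2)=0$, and $t'(\xi)<0$ for $\xi>2$; (4) $\lim_{\xi\to1}t'(\xi)=\infty$ and $\lim_{\xi\to\infty}t'(\xi)=0$; (5) the function $t$ has exactly one inflection point on $(1,\infty)$.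
   Context: $\dim_H$ denotes Hausdorff dimension, with $\dim_H\emptyset=0$. *)

theory Defs
  imports "HOL-Analysis.Analysis"
begin

definition hausdorff_content :: "real \<Rightarrow> real \<Rightarrow> 'a::metric_space set \<Rightarrow> ennreal" where
  "hausdorff_content s \<delta> A =
     (INF C \<in> {C :: nat \<Rightarrow> 'a set. A \<subseteq> (\<Union>i. C i) \<and> (\<forall>i. bounded (C i) \<and> diameter (C i) \<le> \<delta>)}.
        (\<Sum>i. ennreal (diameter (C i) powr s)))"

definition hausdorff_measure :: "real \<Rightarrow> 'a::metric_space set \<Rightarrow> ennreal" where
  "hausdorff_measure s A = (SUP \<delta> \<in> {0<..}. hausdorff_content s \<delta> A)"

text \<open>Hausdorff dimension; the infimum of the empty set is not an issue for subsets of R,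
  and dim_H of the empty set is 0.\<close>
definition hausdorff_dim :: "'a::metric_space set \<Rightarrow> real" where
  "hausdorff_dim A = Inf {s. 0 \<le> s \<and> hausdorff_measure s A = 0}"

text \<open>d1 x is the n \<ge> 1 with x in (2^-n, 2^-n+1]; for x in (0,1] this is floor(-log2 x) + 1
  (the paper writes ceiling(-log2 x), which agrees except at dyadic endpoints).\<close>
definition d1 :: "real \<Rightarrow> nat" where
  "d1 x = nat \<lfloor>- log 2 x\<rfloor> + 1"

definition Tmap :: "real \<Rightarrow> real" where
  "Tmap x = 2 ^ d1 x * x - 1"

definition digit :: "nat \<Rightarrow> real \<Rightarrow> nat" where
  "digit i x = d1 ((Tmap ^^ (i - 1)) x)"

definition khintchine_exp_eq :: "real \<Rightarrow> real \<Rightarrow> bool" where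
  "khintchine_exp_eq x \<xi> \<longleftrightarrow>
     ((\<lambda>n. (\<Sum>j=1..n. real (digit j x)) / real n) \<longlonglongrightarrow> \<xi>)"

definition Elevel :: "real \<Rightarrow> real set" where
  "Elevel \<xi> = {x \<in> {0<..1}. khintchine_exp_eq x \<xi>}"

definition tdim :: "real \<Rightarrow> real" where
  "tdim \<xi> = hausdorff_dim (Elevel \<xi>)"

definition strict_convex_on_real :: "real set \<Rightarrow> (real \<Rightarrow> real) \<Rightarrow> bool" where
  "strict_convex_on_real S f \<longleftrightarrow>
     (\<forall>x\<in>S. \<forall>y\<in>S. \<forall>u. x \<noteq> y \<and> 0 < u \<and> u < 1 \<longrightarrow>
        f ((1 - u) * x + u * y) < (1 - u) * f x + u * f y)"

definition strict_concave_on_real :: "real set \<Rightarrow> (real \<Rightarrow> real) \<Rightarrow> bool" where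
  "strict_concave_on_real S f \<longleftrightarrow> strict_convex_on_real S (\<lambda>x. - f x)"

definition inflection_point :: "(real \<Rightarrow> real) \<Rightarrow> real \<Rightarrow> bool" where
  "inflection_point f c \<longleftrightarrow> (\<exists>e>0.
     (strict_convex_on_real {c-e..c} f \<and> strict_concave_on_real {c..c+e} f) \<or>
     (strict_concave_on_real {c-e..c} f \<and> strict_convex_on_real {c..c+e} f))"

end

theory Submission
  imports Defs "HOL-Probability.Probability" "HOL-Real_Asymp.Real_Asymp"
begin

text \<open>
  Reading the non-terminating binary expansion of \<open>x\<close> as blocks \<open>0 ... 0 1\<close>, the digit \<open>d\<^sub>i(x)\<close>
  is the length of the \<open>i\<close>-th block. Hence \<open>\<gamma>(x) = \<xi>\<close> iff the ones occur in the expansion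
  with asymptotic frequency \<open>1 / \<xi>\<close>, and \<open>E(\<xi>)\<close> is a Besicovitch-Eggleston set, whose
  dimension is the binary entropy \<open>H(1 / \<xi>) / log 2\<close>, \<open>H(p) = - p log p - (1 - p) log (1 - p)\<close>.

  For the upper bound, \<open>E(\<xi>)\<close> is covered at level \<open>m\<close> by the dyadic intervals whose first
  \<open>m\<close> digits contain about \<open>m / \<xi>\<close> ones; there are roughly \<open>exp (m H(1 / \<xi>))\<close> of them.
  For the lower bound, the Bernoulli product measure with parameter \<open>1 / \<xi>\<close> is carried by
  \<open>E(\<xi>)\<close> (strong law of large numbers, from Chernoff bounds and Borel-Cantelli), and on a
  set of positive measure its cylinders of level \<open>m\<close> have measure at most \<open>2 ^ (- m s)\<close> for
  any \<open>s < H(1 / \<xi>) / log 2\<close>; the mass distribution principle then bounds the \<open>s\<close>-dimensional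
  Hausdorff measure from below. The remaining claims are calculus on the explicit formula;
  the inflection point is the unique root of \<open>2 log (\<xi> - 1) = \<xi> / (\<xi> - 1)\<close>.
\<close>

section \<open>Binary expansions\<close>

definition bin_value :: "(nat \<Rightarrow> bool) \<Rightarrow> real" where
  "bin_value \<omega> = (\<Sum>i. of_bool (\<omega> i) / 2 ^ Suc i)"

fun bin_prefix :: "nat \<Rightarrow> (nat \<Rightarrow> bool) \<Rightarrow> nat" where
  "bin_prefix 0 \<omega> = 0"
| "bin_prefix (Suc m) \<omega> = 2 * bin_prefix m \<omega> + of_bool (\<omega> m)"

lemma summable_bin_value: "summable (\<lambda>i. of_bool (\<omega> i) / 2 ^ Suc i :: real)"
  by (rule summable_comparison_test'[OF sums_summable[OF power_half_series]])
     (simp add: power_one_over)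

lemma bin_value_nonneg: "0 \<le> bin_value \<omega>"
  unfolding bin_value_def by (rule suminf_nonneg[OF summable_bin_value]) simp

lemma bin_value_le_1: "bin_value \<omega> \<le> 1"
proof -
  have "bin_value \<omega> \<le> (\<Sum>i. (1/2::real) ^ Suc i)"
    unfolding bin_value_def
    by (rule suminf_le[OF _ summable_bin_value sums_summable[OF power_half_series]])
       (simp add: power_one_over)
  then show ?thesis
    using sums_unique[OF power_half_series] by simp
qed

lemma bin_value_pos: "\<omega> i \<Longrightarrow> 0 < bin_value \<omega>"
  unfolding bin_value_def by (rule suminf_pos2[OF summable_bin_value]) auto

lemma sum_bin_value_prefix: "(\<Sum>i<m. of_bool (\<omega> i) / 2 ^ Suc i) = real (bin_prefix m \<omega>) / 2 ^ m"
  by (induction m) (auto simp: field_simps)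

lemma bin_value_split:
  "bin_value \<omega> = (real (bin_prefix m \<omega>) + bin_value (\<lambda>i. \<omega> (i + m))) / 2 ^ m"
proof -
  have "bin_value \<omega> = (\<Sum>i. of_bool (\<omega> (i + m)) / 2 ^ Suc i / 2 ^ m) + real (bin_prefix m \<omega>) / 2 ^ m"
    unfolding bin_value_def suminf_split_initial_segment[OF summable_bin_value, of _ m]
      sum_bin_value_prefix
    by (simp add: power_add field_simps)
  also have "(\<Sum>i. of_bool (\<omega> (i + m)) / 2 ^ Suc i / 2 ^ m) = bin_value (\<lambda>i. \<omega> (i + m)) / 2 ^ m"
    unfolding bin_value_def by (rule suminf_divide[OF summable_bin_value])
  finally show ?thesis
    by (simp add: add_divide_distrib)
qed

lemma bin_value_bounds:
  "real (bin_prefix m \<omega>) / 2 ^ m \<le> bin_value \<omega>"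
  "bin_value \<omega> \<le> (real (bin_prefix m \<omega>) + 1) / 2 ^ m"
  using bin_value_nonneg[of "\<lambda>i. \<omega> (i + m)"] bin_value_le_1[of "\<lambda>i. \<omega> (i + m)"]
  by (subst bin_value_split[of _ m]; simp add: divide_right_mono)+

lemma bin_prefix_less: "bin_prefix m \<omega> < 2 ^ m"
  by (induction m) auto

lemma bin_prefix_eq_iff:
  "bin_prefix m \<omega> = bin_prefix m \<omega>' \<longleftrightarrow> (\<forall>i<m. \<omega> i = \<omega>' i)"
proof (induction m)
  case (Suc m)
  have "2 * a + of_bool b = 2 * a' + of_bool b' \<longleftrightarrow> a = a' \<and> b = b'" for a a' :: nat and b b'
    by (cases b; cases b') (auto, presburger+)
  then show ?case
    using Suc by (auto simp: less_Suc_eq)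
qed simp

definition first_one :: "(nat \<Rightarrow> bool) \<Rightarrow> nat" where
  "first_one \<omega> = (LEAST i. \<omega> i)"

lemma first_one: "\<omega> i \<Longrightarrow> \<omega> (first_one \<omega>)"
  unfolding first_one_def by (rule LeastI)

lemma not_less_first_one: "i < first_one \<omega> \<Longrightarrow> \<not> \<omega> i"
  unfolding first_one_def by (rule not_less_Least)

lemma INFM_shift:
  fixes \<omega> :: "nat \<Rightarrow> bool"
  assumes "\<exists>\<^sub>\<infinity>i. \<omega> i"
  shows "\<exists>\<^sub>\<infinity>i. \<omega> (i + k)"
  unfolding INFM_nat_le
proof
  fix m
  obtain i where "m + k \<le> i" "\<omega> i"
    using assms unfolding INFM_nat_le by blast
  then show "\<exists>n\<ge>m. \<omega> (n + k)"
    by (intro exI[of _ "i - k"]) auto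
qed

lemma d1_eqI:
  assumes "1 / 2 ^ Suc a < x" "x \<le> 1 / 2 ^ a"
  shows "d1 x = Suc a"
proof -
  have "0 < (1::real) / 2 ^ Suc a"
    by simp
  then have x: "0 < x"
    using assms(1) by linarith
  have "2 powr real a \<le> 1 / x" "1 / x < 2 powr (real a + 1)"
    using assms x by (simp_all add: powr_realpow powr_add field_simps)
  then have "\<lfloor>log 2 (1 / x)\<rfloor> = int a"
    using x by (subst floor_log_eq_powr_iff) auto
  moreover have "- log 2 x = log 2 (1 / x)"
    using x by (simp add: log_divide)
  ultimately show ?thesis
    unfolding d1_def by simp
qed

lemma d1_Tmap_bin_value:
  assumes "\<exists>\<^sub>\<infinity>i. \<omega> i"
  defines "\<omega>' \<equiv> \<lambda>i. \<omega> (i + Suc (first_one \<omega>))"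
  shows "d1 (bin_value \<omega>) = Suc (first_one \<omega>)" and "Tmap (bin_value \<omega>) = bin_value \<omega>'"
proof -
  define a where "a = first_one \<omega>"
  obtain j where "\<omega>' j"
    using INFM_shift[OF assms(1)] unfolding \<omega>'_def INFM_nat_le by blast
  then have v: "0 < bin_value \<omega>'" "bin_value \<omega>' \<le> 1"
    using bin_value_pos bin_value_le_1 by auto
  have "bin_prefix (Suc a) \<omega> = 1"
  proof -
    have "bin_prefix a \<omega> = bin_prefix a (\<lambda>_. False)"
      unfolding bin_prefix_eq_iff a_def using not_less_first_one by blast
    moreover have "bin_prefix a (\<lambda>_. False) = 0"
      by (induction a) auto
    moreover have "\<omega> a"
      unfolding a_def using assms(1) first_one INFM_EX by blast
    ultimately show ?thesis
      by simp
  qed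
  then have x: "bin_value \<omega> = (1 + bin_value \<omega>') / 2 ^ Suc a"
    using bin_value_split[of \<omega> "Suc a"] unfolding \<omega>'_def a_def by simp
  have "1 / 2 ^ Suc a < bin_value \<omega>" "bin_value \<omega> \<le> 1 / 2 ^ a"
    unfolding x using v by (simp_all add: divide_strict_right_mono field_simps)
  then show d: "d1 (bin_value \<omega>) = Suc (first_one \<omega>)"
    unfolding a_def by (rule d1_eqI)
  have "Tmap (bin_value \<omega>) = 2 ^ Suc a * bin_value \<omega> - 1"
    unfolding Tmap_def d a_def ..
  also have "\<dots> = bin_value \<omega>'"
    unfolding x by simp
  finally show "Tmap (bin_value \<omega>) = bin_value \<omega>'" .
qed

text \<open>The length of the shortest prefix of \<open>\<omega>\<close> containing \<open>k\<close> ones; for the point with binary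
  expansion \<open>\<omega>\<close> this is \<open>d\<^sub>1 + \<dots> + d\<^sub>k\<close>.\<close>

fun ones_prefix_len :: "nat \<Rightarrow> (nat \<Rightarrow> bool) \<Rightarrow> nat" where
  "ones_prefix_len 0 \<omega> = 0"
| "ones_prefix_len (Suc k) \<omega> =
     ones_prefix_len k \<omega> + Suc (first_one (\<lambda>i. \<omega> (i + ones_prefix_len k \<omega>)))"

lemma strict_mono_ones_prefix_len: "strict_mono (\<lambda>k. ones_prefix_len k \<omega>)"
  by (rule strict_monoI_Suc) simp

lemma Tmap_iterate_bin_value:
  assumes "\<exists>\<^sub>\<infinity>i. \<omega> i"
  shows "(Tmap ^^ k) (bin_value \<omega>) = bin_value (\<lambda>i. \<omega> (i + ones_prefix_len k \<omega>))"
proof (induction k)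
  case (Suc k)
  let ?L = "ones_prefix_len k \<omega>"
  have "(Tmap ^^ Suc k) (bin_value \<omega>) = Tmap (bin_value (\<lambda>i. \<omega> (i + ?L)))"
    using Suc by simp
  also have "\<dots> = bin_value (\<lambda>i. \<omega> (i + Suc (first_one (\<lambda>i. \<omega> (i + ?L))) + ?L))"
    by (rule d1_Tmap_bin_value(2)[OF INFM_shift[OF assms]])
  also have "\<dots> = bin_value (\<lambda>i. \<omega> (i + ones_prefix_len (Suc k) \<omega>))"
    by (simp add: ac_simps)
  finally show ?case .
qed simp

lemma sum_digits_bin_value:
  assumes "\<exists>\<^sub>\<infinity>i. \<omega> i"
  shows "(\<Sum>j=1..n. real (digit j (bin_value \<omega>))) = real (ones_prefix_len n \<omega>)"
proof (induction n)
  case (Suc n)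
  have "digit (Suc n) (bin_value \<omega>) = Suc (first_one (\<lambda>i. \<omega> (i + ones_prefix_len n \<omega>)))"
    unfolding digit_def
    using Tmap_iterate_bin_value[OF assms] d1_Tmap_bin_value(1)[OF INFM_shift[OF assms]] by simp
  then show ?case
    using Suc by simp
qed simp

section \<open>Frequency of ones and the Khintchine exponent\<close>

definition count_ones :: "nat \<Rightarrow> (nat \<Rightarrow> bool) \<Rightarrow> nat" where
  "count_ones m \<omega> = card {i. i < m \<and> \<omega> i}"

lemma count_ones_0 [simp]: "count_ones 0 \<omega> = 0"
  by (simp add: count_ones_def)

lemma count_ones_Suc: "count_ones (Suc m) \<omega> = count_ones m \<omega> + of_bool (\<omega> m)"
proof -
  have "{i. i < Suc m \<and> \<omega> i} = {i. i < m \<and> \<omega> i} \<union> (if \<omega> m then {m} else {})"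
    by (auto simp: less_Suc_eq)
  then show ?thesis
    unfolding count_ones_def by (auto simp: card_insert_if)
qed

lemma count_ones_add: "count_ones (a + l) \<omega> = count_ones a \<omega> + count_ones l (\<lambda>i. \<omega> (i + a))"
  by (induction l) (simp_all add: count_ones_Suc add.commute)

lemma count_ones_le: "count_ones m \<omega> \<le> m"
  unfolding count_ones_def using card_mono[of "{..<m}" "{i. i < m \<and> \<omega> i}"] by auto

lemma count_ones_mono: "m \<le> m' \<Longrightarrow> count_ones m \<omega> \<le> count_ones m' \<omega>"
  unfolding count_ones_def by (rule card_mono) auto

lemma count_ones_eq_0: "(\<And>i. i < m \<Longrightarrow> \<not> \<omega> i) \<Longrightarrow> count_ones m \<omega> = 0"
  unfolding count_ones_def by auto

lemma count_ones_first_one: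
  assumes "\<omega> i"
  shows "count_ones (Suc (first_one \<omega>)) \<omega> = 1"
proof -
  have "count_ones (first_one \<omega>) \<omega> = 0"
    by (rule count_ones_eq_0) (rule not_less_first_one)
  then show ?thesis
    using first_one[of \<omega>, OF assms] by (simp add: count_ones_Suc)
qed

lemma count_ones_ones_prefix_len:
  fixes \<omega> :: "nat \<Rightarrow> bool"
  assumes "\<exists>\<^sub>\<infinity>i. \<omega> i"
  shows "count_ones (ones_prefix_len k \<omega>) \<omega> = k"
proof (induction k)
  case (Suc k)
  obtain j where j: "\<omega> (j + ones_prefix_len k \<omega>)"
    using INFM_shift[OF assms] INFM_EX by blast
  have "count_ones (ones_prefix_len (Suc k) \<omega>) \<omega> = count_ones (ones_prefix_len k \<omega>) \<omega> +
      count_ones (Suc (first_one (\<lambda>i. \<omega> (i + ones_prefix_len k \<omega>))))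
        (\<lambda>i. \<omega> (i + ones_prefix_len k \<omega>))"
    by (simp only: ones_prefix_len.simps count_ones_add)
  then show ?case
    using Suc count_ones_first_one[of "\<lambda>i. \<omega> (i + ones_prefix_len k \<omega>)", OF j] by simp
qed simp

lemma count_ones_less_ones_prefix_len:
  fixes \<omega> :: "nat \<Rightarrow> bool"
  assumes "\<exists>\<^sub>\<infinity>i. \<omega> i" and "m < ones_prefix_len k \<omega>"
  shows "count_ones m \<omega> < k"
  using assms(2)
proof (induction k arbitrary: m)
  case (Suc k)
  show ?case
  proof (cases "m < ones_prefix_len k \<omega>")
    case True
    then show ?thesis
      using Suc.IH by fastforce
  next
    case False
    then obtain l where m: "m = ones_prefix_len k \<omega> + l"
      using le_Suc_ex not_less by blast
    define \<omega>' where "\<omega>' = (\<lambda>i. \<omega> (i + ones_prefix_len k \<omega>))"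
    from m Suc.prems have "l \<le> first_one \<omega>'"
      by (simp add: \<omega>'_def)
    then have "count_ones l \<omega>' = 0"
      using not_less_first_one[of _ \<omega>'] by (intro count_ones_eq_0) simp
    then show ?thesis
      unfolding m count_ones_add count_ones_ones_prefix_len[OF assms(1)] \<omega>'_def by simp
  qed
qed simp

lemma le_count_ones_iff:
  fixes \<omega> :: "nat \<Rightarrow> bool"
  assumes "\<exists>\<^sub>\<infinity>i. \<omega> i"
  shows "k \<le> count_ones m \<omega> \<longleftrightarrow> ones_prefix_len k \<omega> \<le> m"
  using count_ones_less_ones_prefix_len[OF assms, of m k]
    count_ones_mono[of "ones_prefix_len k \<omega>" m \<omega>] count_ones_ones_prefix_len[OF assms, of k]
  by linarith

lemma INFM_if_frequency_pos:
  fixes \<omega> :: "nat \<Rightarrow> bool"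
  assumes "0 < p" and lim: "(\<lambda>m. real (count_ones m \<omega>) / real m) \<longlonglongrightarrow> p"
  shows "\<exists>\<^sub>\<infinity>i. \<omega> i"
proof (rule ccontr)
  assume "\<not> (\<exists>\<^sub>\<infinity>i. \<omega> i)"
  then obtain n where n: "\<And>i. n \<le> i \<Longrightarrow> \<not> \<omega> i"
    unfolding not_INFM MOST_nat_le by blast
  have "count_ones m \<omega> \<le> n" for m
  proof -
    have "{i. i < m \<and> \<omega> i} \<subseteq> {..<n}"
      using n not_le by auto
    then show ?thesis
      unfolding count_ones_def using card_mono[of "{..<n}"] by fastforce
  qed
  then have "\<forall>m. real (count_ones m \<omega>) / real m \<le> real n / real m"
    by (simp add: divide_right_mono)
  moreover have "(\<lambda>m. real n / real m) \<longlonglongrightarrow> 0"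
    by real_asymp
  ultimately have "p \<le> 0"
    using LIMSEQ_le[OF lim] by blast
  with \<open>0 < p\<close> show False
    by simp
qed

lemma tendsto_galois_inverse:
  fixes S N :: "nat \<Rightarrow> nat"
  assumes S: "strict_mono S" and galois: "\<And>k m. k \<le> N m \<longleftrightarrow> S k \<le> m" and "0 < \<xi>"
  shows "(\<lambda>n. real (S n) / real n) \<longlonglongrightarrow> \<xi> \<longleftrightarrow> (\<lambda>m. real (N m) / real m) \<longlonglongrightarrow> 1 / \<xi>"
proof
  assume lim: "(\<lambda>m. real (N m) / real m) \<longlonglongrightarrow> 1 / \<xi>"
  have NS: "N (S k) = k" for k
    using galois[of k "S k"] galois[of "Suc k" "S k"] strict_monoD[OF S, of k "Suc k"] by simp
  have "(\<lambda>k. real k / real (S k)) \<longlonglongrightarrow> 1 / \<xi>"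
    using LIMSEQ_subseq_LIMSEQ[OF lim S] by (simp add: o_def NS)
  then have "(\<lambda>k. inverse (real k / real (S k))) \<longlonglongrightarrow> inverse (1 / \<xi>)"
    using \<open>0 < \<xi>\<close> by (intro tendsto_inverse) auto
  then show "(\<lambda>n. real (S n) / real n) \<longlonglongrightarrow> \<xi>"
    by simp
next
  assume lim: "(\<lambda>n. real (S n) / real n) \<longlonglongrightarrow> \<xi>"
  have N: "filterlim N at_top sequentially"
    unfolding filterlim_at_top eventually_sequentially using galois by blast
  have lower: "(\<lambda>m. real (S (N m)) / real (N m)) \<longlonglongrightarrow> \<xi>"
    by (rule filterlim_compose[OF lim N])
  have "(\<lambda>n. real (S (Suc n)) / real (Suc n) * (real (Suc n) / real n)) \<longlonglongrightarrow> \<xi> * 1"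
    by (intro tendsto_mult LIMSEQ_Suc_n_over_n filterlim_compose[OF lim filterlim_Suc])
  moreover have "real (S (Suc n)) / real (Suc n) * (real (Suc n) / real n)
      = real (S (Suc n)) / real n"
    for n
    by (simp del: of_nat_Suc)
  ultimately have "(\<lambda>n. real (S (Suc n)) / real n) \<longlonglongrightarrow> \<xi>"
    by simp
  then have upper: "(\<lambda>m. real (S (Suc (N m))) / real (N m)) \<longlonglongrightarrow> \<xi>"
    by (rule filterlim_compose[OF _ N])
  have "S (N m) \<le> m" "m \<le> S (Suc (N m))" for m
    using galois[of "N m" m] galois[of "Suc (N m)" m] by auto
  then have "(\<lambda>m. real m / real (N m)) \<longlonglongrightarrow> \<xi>"
    by (intro tendsto_sandwich[OF _ _ lower upper] always_eventually allI divide_right_mono) auto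
  then have "(\<lambda>m. inverse (real m / real (N m))) \<longlonglongrightarrow> inverse \<xi>"
    using \<open>0 < \<xi>\<close> by (intro tendsto_inverse) auto
  then show "(\<lambda>m. real (N m) / real m) \<longlonglongrightarrow> 1 / \<xi>"
    by (simp add: inverse_eq_divide)
qed

lemma khintchine_exp_eq_bin_value_iff:
  fixes \<omega> :: "nat \<Rightarrow> bool"
  assumes "\<exists>\<^sub>\<infinity>i. \<omega> i" and "0 < \<xi>"
  shows "khintchine_exp_eq (bin_value \<omega>) \<xi> \<longleftrightarrow> (\<lambda>m. real (count_ones m \<omega>) / real m) \<longlonglongrightarrow> 1 / \<xi>"
  unfolding khintchine_exp_eq_def sum_digits_bin_value[OF assms(1)]
  by (rule tendsto_galois_inverse[OF strict_mono_ones_prefix_len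
      le_count_ones_iff[OF assms(1)] assms(2)])

lemma bin_value_in_Elevel:
  fixes \<omega> :: "nat \<Rightarrow> bool"
  assumes "0 < p" and lim: "(\<lambda>m. real (count_ones m \<omega>) / real m) \<longlonglongrightarrow> p"
  shows "bin_value \<omega> \<in> Elevel (1 / p)"
proof -
  have inf: "\<exists>\<^sub>\<infinity>i. \<omega> i"
    by (rule INFM_if_frequency_pos[OF assms])
  then obtain i where "\<omega> i"
    using INFM_EX by blast
  then have "bin_value \<omega> \<in> {0<..1}"
    using bin_value_pos bin_value_le_1 by auto
  moreover have "khintchine_exp_eq (bin_value \<omega>) (1 / p)"
    using khintchine_exp_eq_bin_value_iff[OF inf] lim \<open>0 < p\<close> by simp
  ultimately show ?thesis
    unfolding Elevel_def by simp
qed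

text \<open>Ceilings rather than floors select, at dyadic rationals, the expansion with infinitely
  many ones, which is the one followed by \<open>T\<close>.\<close>

definition bin_digits :: "real \<Rightarrow> nat \<Rightarrow> bool" where
  "bin_digits x i \<longleftrightarrow> \<lceil>2 ^ Suc i * x\<rceil> = 2 * \<lceil>2 ^ i * x\<rceil>"

lemma ceiling_double_cases: "\<lceil>2 * y\<rceil> = 2 * \<lceil>y\<rceil> \<or> \<lceil>2 * y\<rceil> = 2 * \<lceil>y\<rceil> - 1"
  for y :: real
proof -
  have "of_int \<lceil>y\<rceil> - 1 < y" "y \<le> of_int \<lceil>y\<rceil>"
    by linarith+
  then have "\<lceil>2 * y\<rceil> \<le> 2 * \<lceil>y\<rceil>" "2 * \<lceil>y\<rceil> - 2 < \<lceil>2 * y\<rceil>"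
    by linarith+
  then show ?thesis
    by linarith
qed

lemma bin_prefix_bin_digits:
  assumes "x \<in> {0<..1}"
  shows "int (bin_prefix m (bin_digits x)) = \<lceil>2 ^ m * x\<rceil> - 1"
proof (induction m)
  case 0
  then show ?case
    using assms by (simp add: ceiling_eq_iff)
next
  case (Suc m)
  then show ?case
    using ceiling_double_cases[of "2 ^ m * x"] unfolding bin_digits_def by (auto simp: mult.assoc)
qed

lemma bin_prefix_bin_digits_real:
  "x \<in> {0<..1} \<Longrightarrow> real (bin_prefix m (bin_digits x)) = of_int \<lceil>2 ^ m * x\<rceil> - 1"
  using bin_prefix_bin_digits[of x m] by (metis of_int_diff of_int_of_nat_eq of_int_1)

lemma bin_value_bin_digits:
  assumes x: "x \<in> {0<..1}"
  shows "bin_value (bin_digits x) = x"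
proof -
  have "\<bar>bin_value (bin_digits x) - x\<bar> \<le> (1/2) ^ m" for m
  proof -
    define c where "c = real_of_int \<lceil>2 ^ m * x\<rceil>"
    have "(c - 1) / 2 ^ m \<le> bin_value (bin_digits x)" "bin_value (bin_digits x) \<le> c / 2 ^ m"
      using bin_value_bounds[where m = m and \<omega> = "bin_digits x"] bin_prefix_bin_digits_real[OF x]
      by (auto simp: c_def)
    moreover have "(c - 1) / 2 ^ m < x" "x \<le> c / 2 ^ m"
      unfolding c_def by (simp_all add: field_simps, linarith+)
    ultimately have "\<bar>bin_value (bin_digits x) - x\<bar> \<le> c / 2 ^ m - (c - 1) / 2 ^ m"
      unfolding abs_le_iff by linarith
    also have "\<dots> = (1/2) ^ m"
      by (simp add: diff_divide_distrib[symmetric] power_one_over)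
    finally show ?thesis .
  qed
  then have "(\<lambda>m. \<bar>bin_value (bin_digits x) - x\<bar>) \<longlonglongrightarrow> 0"
    by (intro tendsto_sandwich[OF _ _ tendsto_const LIMSEQ_power_zero[of "1/2::real"]]) simp_all
  then show ?thesis
    by (simp add: LIMSEQ_const_iff)
qed

lemma INFM_bin_digits:
  assumes x: "x \<in> {0<..1}"
  shows "\<exists>\<^sub>\<infinity>i. bin_digits x i"
proof (rule ccontr)
  assume "\<not> (\<exists>\<^sub>\<infinity>i. bin_digits x i)"
  then obtain n where n: "\<And>i. n \<le> i \<Longrightarrow> \<not> bin_digits x i"
    unfolding not_INFM MOST_nat_le by blast
  have tail: "bin_value (\<lambda>i. bin_digits x (i + n)) = 0"
    unfolding bin_value_def using n by simp
  have "x = bin_value (bin_digits x)"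
    using bin_value_bin_digits[OF x] by simp
  also have "\<dots> = (real (bin_prefix n (bin_digits x)) + bin_value (\<lambda>i. bin_digits x (i + n)))
      / 2 ^ n"
    by (rule bin_value_split)
  also have "\<dots> = (of_int \<lceil>2 ^ n * x\<rceil> - 1) / 2 ^ n"
    unfolding tail bin_prefix_bin_digits_real[OF x] by simp
  also have "\<dots> < x"
    by (simp add: field_simps) linarith
  finally show False
    by simp
qed

lemma Elevel_iff_frequency:
  assumes "0 < \<xi>"
  shows "x \<in> Elevel \<xi> \<longleftrightarrow>
    x \<in> {0<..1} \<and> (\<lambda>m. real (count_ones m (bin_digits x)) / real m) \<longlonglongrightarrow> 1 / \<xi>"
  using khintchine_exp_eq_bin_value_iff[OF INFM_bin_digits assms] bin_value_bin_digits
  unfolding Elevel_def by auto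

definition delta_cover :: "real \<Rightarrow> 'a::metric_space set \<Rightarrow> (nat \<Rightarrow> 'a set) \<Rightarrow> bool" where
  "delta_cover \<delta> A C \<longleftrightarrow> A \<subseteq> (\<Union>i. C i) \<and> (\<forall>i. bounded (C i) \<and> diameter (C i) \<le> \<delta>)"

definition cover_sum :: "real \<Rightarrow> (nat \<Rightarrow> 'a::metric_space set) \<Rightarrow> ennreal" where
  "cover_sum s C = (\<Sum>i. ennreal (diameter (C i) powr s))"

definition hausdorff_null :: "real \<Rightarrow> 'a::metric_space set \<Rightarrow> bool" where
  "hausdorff_null s A \<longleftrightarrow> (\<forall>\<delta>>0. \<forall>\<eta>>0. \<exists>C. delta_cover \<delta> A C \<and> cover_sum s C \<le> ennreal \<eta>)"

lemma hausdorff_content_le_cover_sum: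
  "delta_cover \<delta> A C \<Longrightarrow> hausdorff_content s \<delta> A \<le> cover_sum s C"
  unfolding hausdorff_content_def cover_sum_def delta_cover_def by (rule INF_lower) auto

lemma le_hausdorff_content:
  "(\<And>C. delta_cover \<delta> A C \<Longrightarrow> c \<le> cover_sum s C) \<Longrightarrow> c \<le> hausdorff_content s \<delta> A"
  unfolding hausdorff_content_def cover_sum_def delta_cover_def by (rule INF_greatest) auto

lemma hausdorff_measure_eq_0_if_null:
  assumes "hausdorff_null s A"
  shows "hausdorff_measure s A = 0"
proof -
  have "hausdorff_content s \<delta> A \<le> 0" if "0 < \<delta>" for \<delta>
  proof (rule ennreal_le_epsilon)
    fix e :: real
    assume "0 < e"
    then obtain C where "delta_cover \<delta> A C" "cover_sum s C \<le> ennreal e"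
      using assms \<open>0 < \<delta>\<close> unfolding hausdorff_null_def by blast
    then show "hausdorff_content s \<delta> A \<le> 0 + ennreal e"
      using hausdorff_content_le_cover_sum[of \<delta> A C s] by simp
  qed
  then show ?thesis
    unfolding hausdorff_measure_def by (simp add: SUP_least)
qed

lemma hausdorff_measure_nonzeroI:
  assumes "0 < \<delta>" and "c \<noteq> 0" and "\<And>C. delta_cover \<delta> A C \<Longrightarrow> c \<le> cover_sum s C"
  shows "hausdorff_measure s A \<noteq> 0"
proof -
  have "c \<le> hausdorff_content s \<delta> A"
    by (rule le_hausdorff_content) (rule assms(3))
  also have "\<dots> \<le> hausdorff_measure s A"
    unfolding hausdorff_measure_def by (rule SUP_upper) (use assms(1) in simp)
  finally show ?thesis
    using assms(2) by auto
qed

lemma hausdorff_dim_eqI: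
  fixes A :: "'a::metric_space set"
  assumes "0 \<le> t"
    and null: "\<And>s. t < s \<Longrightarrow> hausdorff_measure s A = 0"
    and nonnull: "\<And>s. 0 \<le> s \<Longrightarrow> s < t \<Longrightarrow> hausdorff_measure s A \<noteq> 0"
  shows "hausdorff_dim A = t"
proof -
  let ?D = "{s. 0 \<le> s \<and> hausdorff_measure s A = 0}"
  have lower: "t \<le> s" if "s \<in> ?D" for s
    using nonnull that by force
  have "t + 1 \<in> ?D"
    using null[of "t + 1"] \<open>0 \<le> t\<close> by simp
  then have "t \<le> Inf ?D"
    by (intro cInf_greatest lower) auto
  moreover have "Inf ?D \<le> t"
  proof (rule field_le_epsilon)
    fix e :: real
    assume "0 < e"
    then have "t + e \<in> ?D"
      using null[of "t + e"] \<open>0 \<le> t\<close> by simp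
    then show "Inf ?D \<le> t + e"
      by (rule cInf_lower) (use lower in \<open>auto simp: bdd_below_def\<close>)
  qed
  ultimately show ?thesis
    unfolding hausdorff_dim_def by simp
qed

lemma hausdorff_null_subset:
  assumes "A \<subseteq> B" and "hausdorff_null s B"
  shows "hausdorff_null s A"
  unfolding hausdorff_null_def
proof (intro allI impI)
  fix \<delta> \<eta> :: real
  assume "0 < \<delta>" "0 < \<eta>"
  then obtain C where C: "delta_cover \<delta> B C" "cover_sum s C \<le> ennreal \<eta>"
    using assms(2) unfolding hausdorff_null_def by blast
  then have "delta_cover \<delta> A C"
    using assms(1) unfolding delta_cover_def by blast
  with C show "\<exists>C. delta_cover \<delta> A C \<and> cover_sum s C \<le> ennreal \<eta>"
    by blast
qed

lemma suminf_ennreal_half_series: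
  assumes "0 \<le> \<eta>"
  shows "(\<Sum>n. ennreal (\<eta> * (1/2) ^ Suc n)) = ennreal \<eta>"
proof -
  have "(\<lambda>n. \<eta> * (1/2) ^ Suc n) sums \<eta>"
    using sums_mult[OF power_half_series, of \<eta>] by simp
  then show ?thesis
    by (rule suminf_ennreal_eq[rotated]) (simp add: assms)
qed

lemma hausdorff_null_UN:
  fixes A :: "nat \<Rightarrow> 'a::metric_space set"
  assumes "\<And>n. hausdorff_null s (A n)"
  shows "hausdorff_null s (\<Union>n. A n)"
  unfolding hausdorff_null_def
proof (intro allI impI)
  fix \<delta> \<eta> :: real
  assume "0 < \<delta>" "0 < \<eta>"
  then have "\<forall>n. \<exists>C. delta_cover \<delta> (A n) C \<and> cover_sum s C \<le> ennreal (\<eta> * (1/2) ^ Suc n)"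
    using assms unfolding hausdorff_null_def by simp
  then obtain C where C: "\<And>n. delta_cover \<delta> (A n) (C n)"
    and sum_C: "\<And>n. cover_sum s (C n) \<le> ennreal (\<eta> * (1/2) ^ Suc n)"
    by metis
  define D where "D i = (case prod_decode i of (n, j) \<Rightarrow> C n j)" for i
  have "bounded (D i) \<and> diameter (D i) \<le> \<delta>" for i
    using C unfolding delta_cover_def D_def by (simp add: split_beta)
  moreover have "(\<Union>n. A n) \<subseteq> (\<Union>i. D i)"
  proof
    fix x
    assume "x \<in> (\<Union>n. A n)"
    then obtain n j where "x \<in> C n j"
      using C unfolding delta_cover_def by blast
    then show "x \<in> (\<Union>i. D i)"
      unfolding D_def by (intro UN_I[of "prod_encode (n, j)"]) auto
  qed
  ultimately have cover: "delta_cover \<delta> (\<Union>n. A n) D"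
    unfolding delta_cover_def by blast
  have "cover_sum s D = (\<Sum>i. (\<lambda>(n, j). ennreal (diameter (C n j) powr s)) (prod_decode i))"
    unfolding cover_sum_def D_def by (simp add: split_beta)
  also have "\<dots> = (\<Sum>n. cover_sum s (C n))"
    by (rule suminf_ennreal_2dimen) (simp add: cover_sum_def)
  also have "\<dots> \<le> (\<Sum>n. ennreal (\<eta> * (1/2) ^ Suc n))"
    by (rule suminf_le[OF sum_C summableI summableI])
  also have "\<dots> = ennreal \<eta>"
    using \<open>0 < \<eta>\<close> by (intro suminf_ennreal_half_series) simp
  finally show "\<exists>C. delta_cover \<delta> (\<Union>n. A n) C \<and> cover_sum s C \<le> ennreal \<eta>"
    using cover by blast
qed

section \<open>The upper bound\<close>

definition cross_entropy :: "real \<Rightarrow> real \<Rightarrow> real" where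
  "cross_entropy p q = - p * ln q - (1 - p) * ln (1 - q)"

lemma sum_Pow_power_card:
  fixes a b :: "'a::comm_semiring_1"
  assumes "finite I"
  shows "(\<Sum>U\<in>Pow I. a ^ card U * b ^ (card I - card U)) = (a + b) ^ card I"
proof -
  have "(a + b) ^ card I = (\<Sum>U\<in>Pow I. (\<Prod>i\<in>U. a) * (\<Prod>i\<in>I - U. b))"
    using prod_add[OF assms, of "\<lambda>_. a" "\<lambda>_. b"] by simp
  also have "\<dots> = (\<Sum>U\<in>Pow I. a ^ card U * b ^ (card I - card U))"
    using assms by (intro sum.cong refl) (auto simp: card_Diff_subset finite_subset)
  finally show ?thesis ..
qed

definition near_subsets :: "real \<Rightarrow> real \<Rightarrow> nat \<Rightarrow> nat set set" where
  "near_subsets p \<epsilon> m = {U. U \<subseteq> {..<m} \<and> \<bar>real (card U) - p * m\<bar> \<le> \<epsilon> * m}"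

lemma finite_near_subsets: "finite (near_subsets p \<epsilon> m)"
  unfolding near_subsets_def by (rule finite_subset[of _ "Pow {..<m}"]) auto

text \<open>Weighting each subset \<open>U\<close> by \<open>q ^ card U * (1 - q) ^ (m - card U)\<close>, the total weight is \<open>1\<close>,
  while every near subset has weight at least \<open>exp (- m * cross_entropy p q)\<close>, up to the error
  term.\<close>

lemma card_near_subsets_le:
  fixes p q \<epsilon> :: real
  assumes q: "0 < q" "q < 1" and "0 \<le> \<epsilon>"
  shows "real (card (near_subsets p \<epsilon> m)) \<le> exp (cross_entropy p q + \<epsilon> * \<bar>ln q - ln (1 - q)\<bar>) ^ m"
proof -
  define w where "w U = q ^ card U * (1 - q) ^ (m - card U)" for U :: "nat set"
  define E where "E = exp (cross_entropy p q + \<epsilon> * \<bar>ln q - ln (1 - q)\<bar>) ^ m"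
  have weight: "1 \<le> w U * E" if "U \<in> near_subsets p \<epsilon> m" for U
  proof -
    define k where "k = card U"
    have "k \<le> m" "\<bar>real k - p * m\<bar> \<le> \<epsilon> * m"
      using that card_mono[of "{..<m}" U] unfolding near_subsets_def k_def by auto
    have "\<bar>(real k - p * m) * (ln q - ln (1 - q))\<bar> \<le> \<epsilon> * m * \<bar>ln q - ln (1 - q)\<bar>"
      unfolding abs_mult by (rule mult_right_mono) (fact, simp)
    then have "0 \<le> real k * ln q + real (m - k) * ln (1 - q)
        + m * (cross_entropy p q + \<epsilon> * \<bar>ln q - ln (1 - q)\<bar>)"
      using \<open>k \<le> m\<close> unfolding cross_entropy_def by (simp add: of_nat_diff algebra_simps)
    moreover have "w U = exp (real k * ln q + real (m - k) * ln (1 - q))"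
      unfolding w_def k_def[symmetric] using q by (simp add: exp_add exp_of_nat_mult)
    moreover have "E = exp (m * (cross_entropy p q + \<epsilon> * \<bar>ln q - ln (1 - q)\<bar>))"
      unfolding E_def by (simp add: exp_of_nat_mult)
    ultimately show ?thesis
      by (simp add: exp_add[symmetric])
  qed
  have "real (card (near_subsets p \<epsilon> m)) = (\<Sum>U\<in>near_subsets p \<epsilon> m. 1)"
    by simp
  also have "\<dots> \<le> (\<Sum>U\<in>near_subsets p \<epsilon> m. w U * E)"
    by (rule sum_mono) (rule weight)
  also have "\<dots> \<le> (\<Sum>U\<in>Pow {..<m}. w U * E)"
    using q by (intro sum_mono2) (auto simp: near_subsets_def w_def E_def)
  also have "\<dots> = E"
    using sum_Pow_power_card[of "{..<m}" q "1 - q"]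
    unfolding w_def by (simp add: sum_distrib_right[symmetric])
  finally show ?thesis
    unfolding E_def .
qed

definition dyadic_cover :: "nat \<Rightarrow> nat set \<Rightarrow> nat \<Rightarrow> real set" where
  "dyadic_cover m K k = (if k \<in> K then {real k / 2 ^ m .. (real k + 1) / 2 ^ m} else {})"

lemma diameter_dyadic_cover: "diameter (dyadic_cover m K k) = (if k \<in> K then (1/2) ^ m else 0)"
  by (auto simp: dyadic_cover_def diff_divide_distrib[symmetric] power_one_over divide_less_cancel)

lemma cover_sum_dyadic_cover:
  assumes "finite K"
  shows "cover_sum s (dyadic_cover m K) = ennreal (real (card K) * ((1/2) ^ m) powr s)"
proof -
  have "cover_sum s (dyadic_cover m K) = (\<Sum>k\<in>K. ennreal (diameter (dyadic_cover m K k) powr s))"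
    unfolding cover_sum_def by (rule suminf_finite[OF assms]) (simp add: diameter_dyadic_cover)
  also have "\<dots> = (\<Sum>k\<in>K. ennreal (((1/2) ^ m) powr s))"
    by (simp add: diameter_dyadic_cover)
  finally show ?thesis
    by (simp add: ennreal_of_nat_eq_real_of_nat ennreal_mult)
qed

lemma powr_half_power: "((1/2) ^ m) powr s = exp (- s * ln 2) ^ m" for s :: real
  by (simp add: powr_def ln_realpow ln_div exp_of_nat_mult[symmetric] algebra_simps)

definition near_frequency :: "real \<Rightarrow> real \<Rightarrow> nat \<Rightarrow> real set" where
  "near_frequency p \<epsilon> M =
     {x \<in> {0<..1}. \<forall>m\<ge>M. \<bar>real (count_ones m (bin_digits x)) - p * m\<bar> \<le> \<epsilon> * m}"

lemma near_frequency_subset_dyadic_cover: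
  assumes "M \<le> m"
  shows "near_frequency p \<epsilon> M
    \<subseteq> (\<Union>k. dyadic_cover m ((\<lambda>U. bin_prefix m (\<lambda>i. i \<in> U)) ` near_subsets p \<epsilon> m) k)"
proof
  fix x
  assume x: "x \<in> near_frequency p \<epsilon> M"
  define U where "U = {i. i < m \<and> bin_digits x i}"
  have "U \<in> near_subsets p \<epsilon> m"
    using x assms unfolding near_frequency_def near_subsets_def U_def count_ones_def by auto
  moreover have "bin_prefix m (bin_digits x) = bin_prefix m (\<lambda>i. i \<in> U)"
    unfolding bin_prefix_eq_iff U_def by simp
  ultimately have "bin_prefix m (bin_digits x)
      \<in> (\<lambda>U. bin_prefix m (\<lambda>i. i \<in> U)) ` near_subsets p \<epsilon> m"
    by blast
  then show "x \<in> (\<Union>k. dyadic_cover m ((\<lambda>U. bin_prefix m (\<lambda>i. i \<in> U)) ` near_subsets p \<epsilon> m) k)"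
    using bin_value_bounds[where m = m and \<omega> = "bin_digits x"] x
    by (auto simp: dyadic_cover_def near_frequency_def bin_value_bin_digits)
qed

lemma hausdorff_null_near_frequency:
  fixes p q \<epsilon> s :: real
  assumes q: "0 < q" "q < 1" and "0 < \<epsilon>"
    and rate: "cross_entropy p q + \<epsilon> * \<bar>ln q - ln (1 - q)\<bar> < s * ln 2"
  shows "hausdorff_null s (near_frequency p \<epsilon> M)"
  unfolding hausdorff_null_def
proof (intro allI impI)
  fix \<delta> \<eta> :: real
  assume "0 < \<delta>" "0 < \<eta>"
  define r where "r = exp (cross_entropy p q + \<epsilon> * \<bar>ln q - ln (1 - q)\<bar>) * exp (- s * ln 2)"
  have "0 < r" "r < 1"
    using rate unfolding r_def mult_exp_exp by simp_all
  then have "(\<lambda>m. r ^ m) \<longlonglongrightarrow> 0"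
    by (simp add: LIMSEQ_power_zero)
  then have "eventually (\<lambda>m. r ^ m < \<eta>) sequentially"
    using \<open>0 < \<eta>\<close> by (rule order_tendstoD(2))
  moreover have "eventually (\<lambda>m. (1/2::real) ^ m < \<delta>) sequentially"
    using LIMSEQ_power_zero[of "1/2::real"] \<open>0 < \<delta>\<close> by (intro order_tendstoD(2)) simp_all
  ultimately have "eventually (\<lambda>m. r ^ m < \<eta> \<and> (1/2::real) ^ m < \<delta> \<and> M \<le> m) sequentially"
    using eventually_ge_at_top[of M] by eventually_elim simp
  then obtain m where m: "r ^ m < \<eta>" "(1/2::real) ^ m < \<delta>" "M \<le> m"
    unfolding eventually_sequentially by blast
  define K where "K = (\<lambda>U. bin_prefix m (\<lambda>i. i \<in> U)) ` near_subsets p \<epsilon> m"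
  have "delta_cover \<delta> (near_frequency p \<epsilon> M) (dyadic_cover m K)"
    using near_frequency_subset_dyadic_cover[OF m(3)] m(2) \<open>0 < \<delta>\<close>
    unfolding delta_cover_def diameter_dyadic_cover K_def by (auto simp: dyadic_cover_def)
  moreover have "real (card K) \<le> exp (cross_entropy p q + \<epsilon> * \<bar>ln q - ln (1 - q)\<bar>) ^ m"
    using card_image_le[OF finite_near_subsets, of "\<lambda>U. bin_prefix m (\<lambda>i. i \<in> U)" p \<epsilon> m]
      card_near_subsets_le[OF q less_imp_le[OF \<open>0 < \<epsilon>\<close>], where p = p and m = m]
    unfolding K_def by linarith
  then have "real (card K) * ((1/2) ^ m) powr s \<le> r ^ m"
    unfolding powr_half_power r_def power_mult_distrib by (simp add: mult_right_mono)
  then have "cover_sum s (dyadic_cover m K) \<le> ennreal \<eta>"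
    using m(1) unfolding K_def cover_sum_dyadic_cover[OF finite_imageI[OF finite_near_subsets]]
    by (intro ennreal_leI) simp
  ultimately show "\<exists>C. delta_cover \<delta> (near_frequency p \<epsilon> M) C \<and> cover_sum s C \<le> ennreal \<eta>"
    by blast
qed

lemma Elevel_subset_near_frequency:
  assumes "0 < \<xi>" and "0 < \<epsilon>"
  shows "Elevel \<xi> \<subseteq> (\<Union>M. near_frequency (1 / \<xi>) \<epsilon> M)"
proof
  fix x
  assume "x \<in> Elevel \<xi>"
  then have x: "x \<in> {0<..1}"
    and lim: "(\<lambda>m. real (count_ones m (bin_digits x)) / real m) \<longlonglongrightarrow> 1 / \<xi>"
    using Elevel_iff_frequency[OF assms(1)] by auto
  obtain M where M: "\<And>m. M \<le> m \<Longrightarrow> \<bar>real (count_ones m (bin_digits x)) / real m - 1 / \<xi>\<bar> < \<epsilon>"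
    using tendstoD[OF lim assms(2)] unfolding eventually_sequentially dist_real_def by blast
  have "\<bar>real (count_ones m (bin_digits x)) - 1 / \<xi> * m\<bar> \<le> \<epsilon> * m" if "M \<le> m" for m
  proof (cases "m = 0")
    case False
    have "real (count_ones m (bin_digits x)) - 1 / \<xi> * m
        = real m * (real (count_ones m (bin_digits x)) / real m - 1 / \<xi>)"
      using False by (simp add: field_simps)
    then have "\<bar>real (count_ones m (bin_digits x)) - 1 / \<xi> * m\<bar>
        = real m * \<bar>real (count_ones m (bin_digits x)) / real m - 1 / \<xi>\<bar>"
      by (simp add: abs_mult)
    also have "\<dots> \<le> real m * \<epsilon>"
      using M[OF that] by (intro mult_left_mono) auto
    finally show ?thesis
      by (simp add: mult.commute)
  qed simp
  then show "x \<in> (\<Union>M. near_frequency (1 / \<xi>) \<epsilon> M)"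
    using x unfolding near_frequency_def by blast
qed

lemma hausdorff_null_Elevel:
  fixes \<xi> q s :: real
  assumes "0 < \<xi>" and q: "0 < q" "q < 1" and rate: "cross_entropy (1 / \<xi>) q < s * ln 2"
  shows "hausdorff_null s (Elevel \<xi>)"
proof -
  define L where "L = \<bar>ln q - ln (1 - q)\<bar>"
  define g where "g = s * ln 2 - cross_entropy (1 / \<xi>) q"
  define \<epsilon> where "\<epsilon> = g / (2 * (L + 1))"
  have "0 \<le> L" "0 < g"
    using rate unfolding L_def g_def by simp_all
  then have "0 < \<epsilon>"
    unfolding \<epsilon>_def by simp
  have "\<epsilon> * L < \<epsilon> * (L + 1)"
    using \<open>0 < \<epsilon>\<close> by simp
  also have "\<dots> = g / 2"
    unfolding \<epsilon>_def using \<open>0 \<le> L\<close> by (simp add: field_simps)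
  also have "\<dots> < g"
    using \<open>0 < g\<close> by simp
  finally have "\<epsilon> * L < s * ln 2 - cross_entropy (1 / \<xi>) q"
    unfolding g_def .
  then have "hausdorff_null s (near_frequency (1 / \<xi>) \<epsilon> M)" for M
    by (intro hausdorff_null_near_frequency[OF q \<open>0 < \<epsilon>\<close>]) (simp add: L_def)
  then have "hausdorff_null s (\<Union>M. near_frequency (1 / \<xi>) \<epsilon> M)"
    by (rule hausdorff_null_UN)
  then show ?thesis
    by (rule hausdorff_null_subset[OF Elevel_subset_near_frequency[OF \<open>0 < \<xi>\<close> \<open>0 < \<epsilon>\<close>]])
qed

section \<open>Bernoulli sequences\<close>

definition bernoulli_seq :: "real \<Rightarrow> (nat \<Rightarrow> bool) measure" where
  "bernoulli_seq p = (\<Pi>\<^sub>M i\<in>UNIV. measure_pmf (bernoulli_pmf p))"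

lemma prob_space_bernoulli_seq: "prob_space (bernoulli_seq p)"
  unfolding bernoulli_seq_def by (rule prob_space_PiM) (rule measure_pmf.prob_space_axioms)

lemma space_bernoulli_seq: "space (bernoulli_seq p) = UNIV"
  by (simp add: bernoulli_seq_def space_PiM)

lemma measurable_bernoulli_seq_component [measurable]:
  "(\<lambda>\<omega>. \<omega> i) \<in> measurable (bernoulli_seq p) (count_space UNIV)"
proof -
  have "(\<lambda>\<omega>. \<omega> i) \<in> measurable (bernoulli_seq p) (measure_pmf (bernoulli_pmf p))"
    unfolding bernoulli_seq_def by (rule measurable_component_singleton) simp
  moreover have "measurable (bernoulli_seq p) (measure_pmf (bernoulli_pmf p)) =
      measurable (bernoulli_seq p) (count_space UNIV)"
    by (rule measurable_cong_sets) simp_all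
  ultimately show ?thesis
    by simp
qed

lemma count_ones_eq_sum: "real (count_ones m \<omega>) = (\<Sum>i<m. if \<omega> i then 1 else 0)"
  by (induction m) (simp_all add: count_ones_Suc)

lemma measurable_count_ones [measurable]:
  "(\<lambda>\<omega>. real (count_ones m \<omega>)) \<in> borel_measurable (bernoulli_seq p)"
  unfolding count_ones_eq_sum by measurable

definition cylinder_prob :: "real \<Rightarrow> nat \<Rightarrow> (nat \<Rightarrow> bool) \<Rightarrow> real" where
  "cylinder_prob p m \<omega> = (\<Prod>i<m. if \<omega> i then p else 1 - p)"

lemma measurable_cylinder_prob [measurable]:
  "(\<lambda>\<omega>. cylinder_prob p m \<omega>) \<in> borel_measurable (bernoulli_seq p)"
  unfolding cylinder_prob_def by measurable

lemma cylinder_prob_eq: "cylinder_prob p m \<omega> = p ^ count_ones m \<omega> * (1 - p) ^ (m - count_ones m \<omega>)"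
proof (induction m)
  case (Suc m)
  have "count_ones m \<omega> \<le> m"
    by (rule count_ones_le)
  then show ?case
    using Suc by (cases "\<omega> m") (simp_all add: cylinder_prob_def count_ones_Suc Suc_diff_le)
qed (simp add: cylinder_prob_def)

lemma emeasure_bernoulli_seq_cylinder:
  assumes "0 \<le> p" "p \<le> 1"
  shows "emeasure (bernoulli_seq p) {\<omega> \<in> space (bernoulli_seq p). \<forall>i<m. \<omega> i = b i}
    = ennreal (cylinder_prob p m b)"
proof -
  interpret product_prob_space "\<lambda>_::nat. measure_pmf (bernoulli_pmf p)" UNIV
    by unfold_locales
  have "{\<omega> \<in> space (bernoulli_seq p). \<forall>i<m. \<omega> i = b i}
      = {\<omega> \<in> space (bernoulli_seq p). \<forall>i\<in>{..<m}. \<omega> i \<in> {b i}}"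
    by auto
  also have "emeasure (bernoulli_seq p) \<dots> = (\<Prod>i<m. emeasure (measure_pmf (bernoulli_pmf p)) {b i})"
    unfolding bernoulli_seq_def by (rule emeasure_PiM_Collect) auto
  also have "\<dots> = (\<Prod>i<m. ennreal (if b i then p else 1 - p))"
    using assms by (intro prod.cong refl) (simp add: emeasure_pmf_single)
  also have "\<dots> = ennreal (cylinder_prob p m b)"
    unfolding cylinder_prob_def using assms by (subst prod_ennreal) auto
  finally show ?thesis .
qed

lemma emeasure_count_ones_le_sum:
  assumes p: "0 \<le> p" "p \<le> 1"
  shows "emeasure (bernoulli_seq p) {\<omega> \<in> space (bernoulli_seq p). P (count_ones n \<omega>)}
    \<le> ennreal (\<Sum>U | U \<subseteq> {..<n} \<and> P (card U). p ^ card U * (1 - p) ^ (n - card U))"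
proof -
  define G where "G = {U. U \<subseteq> {..<n} \<and> P (card U)}"
  define cyl where "cyl U = {\<omega> \<in> space (bernoulli_seq p). \<forall>i<n. \<omega> i = (i \<in> U)}" for U
  have "finite G"
    unfolding G_def by (rule finite_subset[of _ "Pow {..<n}"]) auto
  have cyl_sets: "cyl U \<in> sets (bernoulli_seq p)" for U
    unfolding cyl_def by measurable
  have "{\<omega> \<in> space (bernoulli_seq p). P (count_ones n \<omega>)} \<subseteq> (\<Union>U\<in>G. cyl U)"
  proof
    fix \<omega>
    assume \<omega>: "\<omega> \<in> {\<omega> \<in> space (bernoulli_seq p). P (count_ones n \<omega>)}"
    define U where "U = {i. i < n \<and> \<omega> i}"
    have "U \<in> G" "\<omega> \<in> cyl U"
      using \<omega> unfolding G_def cyl_def U_def count_ones_def by auto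
    then show "\<omega> \<in> (\<Union>U\<in>G. cyl U)"
      by blast
  qed
  then have "emeasure (bernoulli_seq p) {\<omega> \<in> space (bernoulli_seq p). P (count_ones n \<omega>)}
      \<le> emeasure (bernoulli_seq p) (\<Union>U\<in>G. cyl U)"
    using \<open>finite G\<close> cyl_sets by (intro emeasure_mono) auto
  also have "\<dots> \<le> (\<Sum>U\<in>G. emeasure (bernoulli_seq p) (cyl U))"
    using \<open>finite G\<close> cyl_sets by (intro emeasure_subadditive_finite) auto
  also have "\<dots> = (\<Sum>U\<in>G. ennreal (p ^ card U * (1 - p) ^ (n - card U)))"
  proof (rule sum.cong[OF refl])
    fix U
    assume "U \<in> G"
    then have "{i. i < n \<and> i \<in> U} = U"
      unfolding G_def by auto
    then have "count_ones n (\<lambda>i. i \<in> U) = card U"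
      unfolding count_ones_def by simp
    then show "emeasure (bernoulli_seq p) (cyl U) = ennreal (p ^ card U * (1 - p) ^ (n - card U))"
      unfolding cyl_def emeasure_bernoulli_seq_cylinder[OF p] cylinder_prob_eq by simp
  qed
  also have "\<dots> = ennreal (\<Sum>U\<in>G. p ^ card U * (1 - p) ^ (n - card U))"
    using p by (intro sum_ennreal) simp
  finally show ?thesis
    unfolding G_def .
qed

text \<open>The exponential Chebyshev inequality for the number of ones, evaluated on cylinders:
  each subset of size \<open>k\<close> in the event gets the extra weight \<open>l ^ k * l powr (- a n) \<ge> 1\<close>.\<close>

lemma emeasure_count_ones_chernoff:
  fixes p l a :: real
  assumes p: "0 \<le> p" "p \<le> 1" and "0 < l"
    and weight: "\<And>k. k \<le> n \<Longrightarrow> P k \<Longrightarrow> 1 \<le> l ^ k * l powr (- (a * n))"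
  shows "emeasure (bernoulli_seq p) {\<omega> \<in> space (bernoulli_seq p). P (count_ones n \<omega>)}
    \<le> ennreal ((l powr (- a) * (p * l + 1 - p)) ^ n)"
proof -
  define w where "w U = p ^ card U * (1 - p) ^ (n - card U)" for U :: "nat set"
  have "(\<Sum>U | U \<subseteq> {..<n} \<and> P (card U). w U)
      \<le> (\<Sum>U | U \<subseteq> {..<n} \<and> P (card U). w U * (l ^ card U * l powr (- (a * n))))"
  proof (rule sum_mono)
    fix U
    assume "U \<in> {U. U \<subseteq> {..<n} \<and> P (card U)}"
    then have "1 \<le> l ^ card U * l powr (- (a * n))"
      using weight card_mono[of "{..<n}" U] by auto
    moreover have "0 \<le> w U"
      using p unfolding w_def by simp
    ultimately show "w U \<le> w U * (l ^ card U * l powr (- (a * n)))"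
      by (simp add: mult_le_cancel_left1)
  qed
  also have "\<dots> \<le> (\<Sum>U\<in>Pow {..<n}. w U * (l ^ card U * l powr (- (a * n))))"
    using p \<open>0 < l\<close> by (intro sum_mono2) (auto simp: w_def)
  also have "\<dots> = l powr (- (a * n)) * (\<Sum>U\<in>Pow {..<n}. (p * l) ^ card U * (1 - p) ^ (n - card U))"
    unfolding w_def by (simp add: sum_distrib_left power_mult_distrib algebra_simps)
  also have "\<dots> = (l powr (- a)) ^ n * (p * l + 1 - p) ^ n"
    using sum_Pow_power_card[of "{..<n}" "p * l" "1 - p"] \<open>0 < l\<close>
    by (simp add: powr_realpow[symmetric] powr_powr mult.commute add_diff_eq)
  finally show ?thesis
    using emeasure_count_ones_le_sum[OF p, of P n] unfolding w_def power_mult_distrib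
    by (meson ennreal_leI order_trans)
qed

lemma chernoff_base_above:
  fixes p a :: real
  assumes "p < a"
  shows "\<exists>l>1. l powr (- a) * (p * l + 1 - p) < 1"
proof -
  define g where "g l = l powr (- a) * (p * l + 1 - p)" for l :: real
  have "(g has_real_derivative p - a) (at 1)"
    unfolding g_def by (auto intro!: derivative_eq_intros simp: algebra_simps)
  then obtain d where "0 < d" and d: "\<And>h. 0 < h \<Longrightarrow> h < d \<Longrightarrow> g (1 + h) < g 1"
    using DERIV_neg_dec_right[of g "p - a" 1] assms by auto
  then have "g (1 + d / 2) < 1"
    unfolding g_def by simp
  then show ?thesis
    using \<open>0 < d\<close> unfolding g_def by (intro exI[of _ "1 + d / 2"]) simp
qed

lemma chernoff_base_below:
  fixes p a :: real
  assumes "a < p"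
  shows "\<exists>l. 0 < l \<and> l < 1 \<and> l powr (- a) * (p * l + 1 - p) < 1"
proof -
  define g where "g l = l powr (- a) * (p * l + 1 - p)" for l :: real
  have "(g has_real_derivative p - a) (at 1)"
    unfolding g_def by (auto intro!: derivative_eq_intros simp: algebra_simps)
  then obtain d where "0 < d" and d: "\<And>h. 0 < h \<Longrightarrow> h < d \<Longrightarrow> g (1 - h) < g 1"
    using DERIV_pos_inc_left[of g "p - a" 1] assms by auto
  define h where "h = min (d / 2) (1 / 2)"
  have "0 < h" "h < d" "h < 1"
    unfolding h_def using \<open>0 < d\<close> by auto
  then have "g (1 - h) < 1"
    using d unfolding g_def by simp
  then show ?thesis
    using \<open>0 < h\<close> \<open>h < 1\<close> unfolding g_def by (intro exI[of _ "1 - h"]) simp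
qed

lemma emeasure_count_ones_above:
  fixes p a :: real
  assumes p: "0 \<le> p" "p \<le> 1" and "p < a"
  obtains r where "0 \<le> r" "r < 1" and "\<And>n. emeasure (bernoulli_seq p)
    {\<omega> \<in> space (bernoulli_seq p). a * n \<le> real (count_ones n \<omega>)} \<le> ennreal (r ^ n)"
proof -
  obtain l where l: "1 < l" "l powr (- a) * (p * l + 1 - p) < 1"
    using chernoff_base_above[OF \<open>p < a\<close>] by blast
  have "0 \<le> p * l + 1 - p"
    using p l(1) mult_left_mono[of 1 l p] by simp
  show ?thesis
  proof (rule that)
    show "0 \<le> l powr (- a) * (p * l + 1 - p)" "l powr (- a) * (p * l + 1 - p) < 1"
      using l \<open>0 \<le> p * l + 1 - p\<close> by simp_all
    show "emeasure (bernoulli_seq p) {\<omega> \<in> space (bernoulli_seq p). a * n \<le> real (count_ones n \<omega>)}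
        \<le> ennreal ((l powr (- a) * (p * l + 1 - p)) ^ n)" for n
    proof (rule emeasure_count_ones_chernoff[OF p less_trans[OF zero_less_one l(1)]])
      fix k
      assume "a * n \<le> real k"
      then show "1 \<le> l ^ k * l powr (- (a * n))"
        using l(1) by (simp add: powr_realpow[symmetric] powr_add[symmetric] ge_one_powr_ge_zero)
    qed
  qed
qed

lemma emeasure_count_ones_below:
  fixes p a :: real
  assumes p: "0 \<le> p" "p \<le> 1" and "a < p"
  obtains r where "0 \<le> r" "r < 1" and "\<And>n. emeasure (bernoulli_seq p)
    {\<omega> \<in> space (bernoulli_seq p). real (count_ones n \<omega>) \<le> a * n} \<le> ennreal (r ^ n)"
proof -
  obtain l where l: "0 < l" "l < 1" "l powr (- a) * (p * l + 1 - p) < 1"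
    using chernoff_base_below[OF \<open>a < p\<close>] by blast
  have "0 \<le> p * l"
    using p l(1) by simp
  then have "0 \<le> p * l + 1 - p"
    using p by linarith
  show ?thesis
  proof (rule that)
    show "0 \<le> l powr (- a) * (p * l + 1 - p)" "l powr (- a) * (p * l + 1 - p) < 1"
      using l \<open>0 \<le> p * l + 1 - p\<close> by simp_all
    show "emeasure (bernoulli_seq p) {\<omega> \<in> space (bernoulli_seq p). real (count_ones n \<omega>) \<le> a * n}
        \<le> ennreal ((l powr (- a) * (p * l + 1 - p)) ^ n)" for n
    proof (rule emeasure_count_ones_chernoff[OF p l(1)])
      fix k
      assume "real k \<le> a * n"
      then have "l powr 0 \<le> l powr (real k - a * n)"
        using l by (intro powr_mono') auto
      then show "1 \<le> l ^ k * l powr (- (a * n))"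
        using l(1) by (simp add: powr_realpow[symmetric] powr_add[symmetric])
    qed
  qed
qed

lemma measure_count_ones_far_le:
  fixes p \<epsilon> :: real
  assumes p: "0 \<le> p" "p \<le> 1" and "0 < \<epsilon>"
  obtains r where "0 \<le> r" "r < 1" and "\<And>n. measure (bernoulli_seq p)
    {\<omega> \<in> space (bernoulli_seq p). \<epsilon> * n \<le> \<bar>real (count_ones n \<omega>) - p * n\<bar>} \<le> 2 * r ^ n"
proof -
  interpret prob_space "bernoulli_seq p"
    by (rule prob_space_bernoulli_seq)
  define Up where "Up n = {\<omega> \<in> space (bernoulli_seq p). (p + \<epsilon>) * n \<le> real (count_ones n \<omega>)}" for n
  define Down where "Down n = {\<omega> \<in> space (bernoulli_seq p). real (count_ones n \<omega>) \<le> (p - \<epsilon>) * n}"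
    for n
  obtain r1 where r1: "0 \<le> r1" "r1 < 1" "\<And>n. emeasure (bernoulli_seq p) (Up n) \<le> ennreal (r1 ^ n)"
    using emeasure_count_ones_above[OF p, of "p + \<epsilon>"] \<open>0 < \<epsilon>\<close> unfolding Up_def by auto
  obtain r2 where r2: "0 \<le> r2" "r2 < 1" "\<And>n. emeasure (bernoulli_seq p) (Down n) \<le> ennreal (r2 ^ n)"
    using emeasure_count_ones_below[OF p, of "p - \<epsilon>"] \<open>0 < \<epsilon>\<close> unfolding Down_def by auto
  show ?thesis
  proof
    show "0 \<le> max r1 r2" "max r1 r2 < 1"
      using r1 r2 by auto
    fix n
    have "{\<omega> \<in> space (bernoulli_seq p). \<epsilon> * n \<le> \<bar>real (count_ones n \<omega>) - p * n\<bar>} \<subseteq> Up n \<union> Down n"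
      unfolding Up_def Down_def by (auto simp: algebra_simps abs_le_iff not_le)
    then have "emeasure (bernoulli_seq p) {\<omega> \<in> space (bernoulli_seq p). \<epsilon> * n
        \<le> \<bar>real (count_ones n \<omega>) - p * n\<bar>}
        \<le> emeasure (bernoulli_seq p) (Up n \<union> Down n)"
      by (rule emeasure_mono) (simp add: Up_def Down_def)
    also have "\<dots> \<le> emeasure (bernoulli_seq p) (Up n) + emeasure (bernoulli_seq p) (Down n)"
      by (rule emeasure_subadditive) (simp_all add: Up_def Down_def)
    also have "\<dots> \<le> ennreal (r1 ^ n + r2 ^ n)"
      using add_mono[OF r1(3) r2(3)] r1 r2 by (simp add: ennreal_plus)
    also have "\<dots> \<le> ennreal (2 * max r1 r2 ^ n)"
      using power_mono[of r1 "max r1 r2" n] power_mono[of r2 "max r1 r2" n] r1 r2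
      by (intro ennreal_leI) simp
    finally show "measure (bernoulli_seq p)
        {\<omega> \<in> space (bernoulli_seq p). \<epsilon> * n \<le> \<bar>real (count_ones n \<omega>) - p * n\<bar>} \<le> 2 * max r1 r2 ^ n"
      using r1 r2 by (simp add: emeasure_eq_measure)
  qed
qed

lemma AE_eventually_count_ones_near:
  fixes p \<epsilon> :: real
  assumes p: "0 \<le> p" "p \<le> 1" and "0 < \<epsilon>"
  shows "AE \<omega> in bernoulli_seq p.
    eventually (\<lambda>n. \<bar>real (count_ones n \<omega>) - p * n\<bar> < \<epsilon> * n) sequentially"
proof -
  interpret prob_space "bernoulli_seq p"
    by (rule prob_space_bernoulli_seq)
  define A where
    "A n = {\<omega> \<in> space (bernoulli_seq p). \<epsilon> * n \<le> \<bar>real (count_ones n \<omega>) - p * n\<bar>}" for n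
  obtain r where r: "0 \<le> r" "r < 1" and bound: "\<And>n. measure (bernoulli_seq p) (A n) \<le> 2 * r ^ n"
    using measure_count_ones_far_le[OF p \<open>0 < \<epsilon>\<close>] unfolding A_def by blast
  have A_sets: "A n \<in> sets (bernoulli_seq p)" for n
    unfolding A_def by measurable
  have "summable (\<lambda>n. measure (bernoulli_seq p) (A n))"
  proof (rule summable_comparison_test')
    show "summable (\<lambda>n. 2 * r ^ n)"
      using r by (intro summable_mult summable_geometric) simp
    show "norm (measure (bernoulli_seq p) (A n)) \<le> 2 * r ^ n" for n
      using bound[of n] by simp
  qed
  then have "AE \<omega> in bernoulli_seq p. eventually (\<lambda>n. \<omega> \<in> space (bernoulli_seq p) - A n)
      sequentially"
    by (intro borel_cantelli_AE1 A_sets) (simp_all add: emeasure_eq_measure)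
  then show ?thesis
    by (rule AE_mp) (auto simp: A_def not_le elim: eventually_mono intro!: AE_I2)
qed

lemma tendsto_divide_if_eventually_near:
  fixes f :: "nat \<Rightarrow> real" and p :: real
  assumes near: "\<And>k::nat. eventually (\<lambda>n. \<bar>f n - p * n\<bar> < 1 / real (Suc k) * n) sequentially"
  shows "(\<lambda>n. f n / n) \<longlonglongrightarrow> p"
proof (rule tendstoI)
  fix e :: real
  assume "0 < e"
  then obtain k where k: "1 / real (Suc k) < e"
    using reals_Archimedean by (auto simp: inverse_eq_divide)
  show "eventually (\<lambda>n. dist (f n / n) p < e) sequentially"
    using near[of k] eventually_ge_at_top[of 1]
  proof eventually_elim
    case (elim n)
    then have "dist (f n / n) p = \<bar>f n - p * n\<bar> / n"
      by (simp add: dist_real_def field_simps abs_divide)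
    also have "\<dots> < 1 / real (Suc k)"
      using elim by (simp add: divide_less_eq)
    finally show ?case
      using k by simp
  qed
qed

lemma AE_frequency_bernoulli_seq:
  assumes "0 \<le> p" "p \<le> 1"
  shows "AE \<omega> in bernoulli_seq p. (\<lambda>n. real (count_ones n \<omega>) / n) \<longlonglongrightarrow> p"
proof -
  have "AE \<omega> in bernoulli_seq p. \<forall>k::nat.
      eventually (\<lambda>n. \<bar>real (count_ones n \<omega>) - p * n\<bar> < 1 / real (Suc k) * n) sequentially"
    unfolding AE_all_countable by (intro allI AE_eventually_count_ones_near[OF assms]) simp
  then show ?thesis
    by (rule AE_mp) (auto intro!: AE_I2 tendsto_divide_if_eventually_near)
qed

section \<open>The lower bound\<close>

text \<open>On this set the Bernoulli measure satisfies the Frostman condition with exponent \<open>s\<close>.\<close>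

definition frostman_set :: "real \<Rightarrow> real \<Rightarrow> nat \<Rightarrow> (nat \<Rightarrow> bool) set" where
  "frostman_set p s M =
     {\<omega> \<in> space (bernoulli_seq p). \<forall>m\<in>{M..}. cylinder_prob p m \<omega> \<le> ((1/2) ^ m) powr s}"

lemma frostman_set_sets [measurable]: "frostman_set p s M \<in> sets (bernoulli_seq p)"
  unfolding frostman_set_def by measurable

lemma cylinder_prob_eventually_le:
  fixes p s :: real
  assumes p: "0 < p" "p < 1" and s: "s * ln 2 < cross_entropy p p"
    and lim: "(\<lambda>m. real (count_ones m \<omega>) / real m) \<longlonglongrightarrow> p"
  shows "eventually (\<lambda>m. cylinder_prob p m \<omega> \<le> ((1/2) ^ m) powr s) sequentially"
proof -
  define f where "f y = y * ln p + (1 - y) * ln (1 - p)" for y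
  have "(\<lambda>m. f (real (count_ones m \<omega>) / real m)) \<longlonglongrightarrow> f p"
    unfolding f_def by (intro tendsto_intros lim)
  moreover have "f p < - s * ln 2"
    using s unfolding f_def cross_entropy_def by simp
  ultimately have "eventually (\<lambda>m. f (real (count_ones m \<omega>) / real m) < - s * ln 2) sequentially"
    by (rule order_tendstoD)
  then show ?thesis
    using eventually_ge_at_top[of 1]
  proof eventually_elim
    case (elim m)
    have "count_ones m \<omega> \<le> m"
      by (rule count_ones_le)
    have "cylinder_prob p m \<omega>
        = exp (real (count_ones m \<omega>) * ln p + real (m - count_ones m \<omega>) * ln (1 - p))"
      using p by (simp add: cylinder_prob_eq exp_add exp_of_nat_mult)
    also have "real (count_ones m \<omega>) * ln p + real (m - count_ones m \<omega>) * ln (1 - p)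
        = real m * f (real (count_ones m \<omega>) / real m)"
      using elim \<open>count_ones m \<omega> \<le> m\<close> unfolding f_def by (simp add: of_nat_diff field_simps)
    also have "real m * f (real (count_ones m \<omega>) / real m) \<le> real m * (- s * ln 2)"
      using elim by (intro mult_left_mono) auto
    also have "exp (real m * (- s * ln 2)) = ((1/2) ^ m) powr s"
      unfolding powr_half_power exp_of_nat_mult ..
    finally show ?case
      by simp
  qed
qed

lemma frostman_set_pos:
  assumes p: "0 < p" "p < 1" and s: "s * ln 2 < cross_entropy p p"
  obtains M where "0 < measure (bernoulli_seq p) (frostman_set p s M)"
proof -
  interpret prob_space "bernoulli_seq p"
    by (rule prob_space_bernoulli_seq)
  have full: "AE \<omega> in bernoulli_seq p. \<omega> \<in> (\<Union>M. frostman_set p s M)"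
    using AE_frequency_bernoulli_seq[OF less_imp_le[OF p(1)] less_imp_le[OF p(2)]]
  proof eventually_elim
    case (elim \<omega>)
    then obtain M where "\<forall>m\<ge>M. cylinder_prob p m \<omega> \<le> ((1/2) ^ m) powr s"
      using cylinder_prob_eventually_le[OF p s] unfolding eventually_sequentially by blast
    then show ?case
      unfolding frostman_set_def space_bernoulli_seq by auto
  qed
  have "\<exists>M. 0 < measure (bernoulli_seq p) (frostman_set p s M)"
  proof (rule ccontr)
    assume "\<nexists>M. 0 < measure (bernoulli_seq p) (frostman_set p s M)"
    then have "measure (bernoulli_seq p) (frostman_set p s M) = 0" for M
      using measure_nonneg[of "bernoulli_seq p" "frostman_set p s M"] by (meson antisym not_less)
    then have "frostman_set p s M \<in> null_sets (bernoulli_seq p)" for M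
      by (simp add: null_sets_def emeasure_eq_measure)
    then have "AE \<omega> in bernoulli_seq p. \<omega> \<notin> (\<Union>M. frostman_set p s M)"
      by (intro AE_not_in null_sets_UN) auto
    with full have "AE \<omega> in bernoulli_seq p. False"
      by eventually_elim simp
    then show False
      by simp
  qed
  then show ?thesis
    using that by blast
qed

lemma bin_prefix_le_add_2:
  assumes "bin_value \<omega> \<le> bin_value \<omega>' + (1/2) ^ m"
  shows "bin_prefix m \<omega> \<le> bin_prefix m \<omega>' + 2"
proof -
  have "real (bin_prefix m \<omega>) / 2 ^ m \<le> (real (bin_prefix m \<omega>') + 2) / 2 ^ m"
    using assms bin_value_bounds[where m = m and \<omega> = \<omega>] bin_value_bounds[where m = m and \<omega> = \<omega>']
    by (simp add: add_divide_distrib power_one_over)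
  then show ?thesis
    by (simp add: divide_le_cancel)
qed

lemma card_le_3_if_close:
  fixes K :: "nat set"
  assumes "finite K" and close: "\<And>k k'. k \<in> K \<Longrightarrow> k' \<in> K \<Longrightarrow> k \<le> k' + 2"
  shows "card K \<le> 3"
proof (cases "K = {}")
  case False
  have "K \<subseteq> {Min K..Min K + 2}"
    using close[OF _ Min_in[OF \<open>finite K\<close> False]] \<open>finite K\<close> by auto
  then have "card K \<le> card {Min K..Min K + 2}"
    by (rule card_mono[rotated]) simp
  then show ?thesis
    by simp
qed simp

lemma finite_bin_prefixes: "finite {bin_prefix m \<omega> | \<omega>. P \<omega>}"
proof -
  have "{bin_prefix m \<omega> | \<omega>. P \<omega>} \<subseteq> {..<2 ^ m}"
    using bin_prefix_less by auto
  then show ?thesis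
    by (rule finite_subset) simp
qed

lemma card_bin_prefixes_le_3:
  assumes "bounded C" and "diameter C \<le> (1/2) ^ m"
  shows "card {bin_prefix m \<omega> | \<omega>. bin_value \<omega> \<in> C} \<le> 3"
proof (rule card_le_3_if_close[OF finite_bin_prefixes])
  fix k k'
  assume "k \<in> {bin_prefix m \<omega> | \<omega>. bin_value \<omega> \<in> C}" "k' \<in> {bin_prefix m \<omega> | \<omega>. bin_value \<omega> \<in> C}"
  then obtain \<omega> \<omega>' where \<omega>: "k = bin_prefix m \<omega>" "bin_value \<omega> \<in> C"
    and \<omega>': "k' = bin_prefix m \<omega>'" "bin_value \<omega>' \<in> C"
    by blast
  have "dist (bin_value \<omega>) (bin_value \<omega>') \<le> (1/2) ^ m"
    using diameter_bounded_bound[OF assms(1) \<omega>(2) \<omega>'(2)] assms(2) by simp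
  then show "k \<le> k' + 2"
    unfolding \<omega>(1) \<omega>'(1) by (intro bin_prefix_le_add_2) (simp add: dist_real_def abs_le_iff)
qed

lemma emeasure_cylinder_frostman_set:
  assumes p: "0 \<le> p" "p \<le> 1" and "w \<in> frostman_set p s M" "M \<le> m"
  shows "{\<omega> \<in> space (bernoulli_seq p). bin_prefix m \<omega> = bin_prefix m w} \<in> sets (bernoulli_seq p)"
    and "emeasure (bernoulli_seq p) {\<omega> \<in> space (bernoulli_seq p). bin_prefix m \<omega> = bin_prefix m w}
      \<le> ennreal (((1/2) ^ m) powr s)"
proof -
  have cyl: "{\<omega> \<in> space (bernoulli_seq p). bin_prefix m \<omega> = bin_prefix m w}
      = {\<omega> \<in> space (bernoulli_seq p). \<forall>i<m. \<omega> i = w i}"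
    unfolding bin_prefix_eq_iff ..
  then show "{\<omega> \<in> space (bernoulli_seq p). bin_prefix m \<omega> = bin_prefix m w}
      \<in> sets (bernoulli_seq p)"
    by simp
  have "cylinder_prob p m w \<le> ((1/2) ^ m) powr s"
    using assms(3,4) unfolding frostman_set_def by simp
  then show "emeasure (bernoulli_seq p) {\<omega> \<in> space (bernoulli_seq p).
      bin_prefix m \<omega> = bin_prefix m w}
      \<le> ennreal (((1/2) ^ m) powr s)"
    unfolding cyl emeasure_bernoulli_seq_cylinder[OF p] by (rule ennreal_leI)
qed

lemma frostman_set_small_cover:
  assumes p: "0 \<le> p" "p \<le> 1" and "M \<le> m" and C: "bounded C" "diameter C \<le> (1/2) ^ m"
  shows "\<exists>U\<in>sets (bernoulli_seq p). {\<omega> \<in> frostman_set p s M. bin_value \<omega> \<in> C} \<subseteq> U \<and>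
    emeasure (bernoulli_seq p) U \<le> ennreal (3 * ((1/2) ^ m) powr s)"
proof -
  define W where "W = {\<omega> \<in> frostman_set p s M. bin_value \<omega> \<in> C}"
  define K where "K = bin_prefix m ` W"
  define cyl where "cyl k = {\<omega> \<in> space (bernoulli_seq p). bin_prefix m \<omega> = k}" for k
  have K: "K \<subseteq> {bin_prefix m \<omega> | \<omega>. bin_value \<omega> \<in> C}"
    unfolding K_def W_def by blast
  then have "finite K"
    using finite_bin_prefixes by (rule finite_subset)
  have "card K \<le> 3"
    using card_mono[OF finite_bin_prefixes K] card_bin_prefixes_le_3[OF C] by linarith
  have cyl_K: "cyl k \<in> sets (bernoulli_seq p)"
    "emeasure (bernoulli_seq p) (cyl k) \<le> ennreal (((1/2) ^ m) powr s)"
    if "k \<in> K" for k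
    using that emeasure_cylinder_frostman_set[OF p _ \<open>M \<le> m\<close>] unfolding K_def W_def cyl_def by auto
  have cover: "W \<subseteq> (\<Union>k\<in>K. cyl k)"
    unfolding cyl_def W_def K_def frostman_set_def by auto
  have sets: "(\<Union>k\<in>K. cyl k) \<in> sets (bernoulli_seq p)"
    using \<open>finite K\<close> cyl_K by (intro sets.finite_UN) auto
  have "emeasure (bernoulli_seq p) (\<Union>k\<in>K. cyl k) \<le> (\<Sum>k\<in>K. emeasure (bernoulli_seq p) (cyl k))"
    using \<open>finite K\<close> cyl_K by (intro emeasure_subadditive_finite) auto
  also have "\<dots> \<le> (\<Sum>k\<in>K. ennreal (((1/2) ^ m) powr s))"
    using cyl_K by (intro sum_mono) auto
  also have "\<dots> = ennreal (real (card K) * ((1/2) ^ m) powr s)"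
    by (simp add: ennreal_of_nat_eq_real_of_nat ennreal_mult)
  also have "\<dots> \<le> ennreal (3 * ((1/2) ^ m) powr s)"
    using \<open>card K \<le> 3\<close> by (intro ennreal_leI mult_right_mono) auto
  finally show ?thesis
    using cover sets unfolding W_def by blast
qed

lemma exists_dyadic_scale:
  fixes d :: real
  assumes "0 < d" "d \<le> (1/2) ^ M"
  obtains m where "M \<le> m" "d \<le> (1/2) ^ m" "(1/2) ^ Suc m < d"
proof -
  have ex: "\<exists>n. (1/2::real) ^ n < d"
    using real_arch_pow_inv[of d "1/2"] \<open>0 < d\<close> by auto
  define n where "n = (LEAST n. (1/2::real) ^ n < d)"
  have n: "(1/2::real) ^ n < d"
    unfolding n_def by (rule LeastI_ex[OF ex])
  have "M < n"
  proof (rule ccontr)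
    assume "\<not> M < n"
    then have "(1/2::real) ^ M \<le> (1/2) ^ n"
      by (intro power_decreasing) auto
    with n \<open>d \<le> (1/2) ^ M\<close> show False
      by simp
  qed
  then obtain m where "n = Suc m"
    using less_imp_Suc_add by blast
  moreover have "\<not> (1/2::real) ^ m < d"
    using not_less_Least[of m "\<lambda>n. (1/2::real) ^ n < d"] \<open>n = Suc m\<close>
    unfolding n_def[symmetric] by simp
  ultimately show ?thesis
    using \<open>M < n\<close> n by (intro that[of m]) simp_all
qed

text \<open>At the level \<open>m\<close> with \<open>2 ^ (-m - 1) < d \<le> 2 ^ (-m)\<close> we have
  \<open>((1/2) ^ m) powr s0 \<le> 2 powr s * d powr s\<close>; sets of diameter \<open>0\<close> need the slack \<open>e\<close>.\<close>

lemma exists_dyadic_scale_powr: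
  fixes d s s0 e :: real
  assumes d: "0 \<le> d" "d \<le> (1/2) ^ M" and s: "0 \<le> s" "s \<le> s0" "0 < s0" and "0 < e"
  obtains m where "M \<le> m" "d \<le> (1/2) ^ m" "((1/2) ^ m) powr s0 \<le> 2 powr s * d powr s + e"
proof (cases "d = 0")
  case True
  have "((\<lambda>m. exp (- s0 * ln 2) ^ m) \<longlongrightarrow> 0) sequentially"
    using s by (intro LIMSEQ_power_zero) simp
  then have "eventually (\<lambda>m. ((1/2) ^ m) powr s0 < e) sequentially"
    unfolding powr_half_power using \<open>0 < e\<close> by (rule order_tendstoD(2))
  then obtain N where N: "\<And>m. N \<le> m \<Longrightarrow> ((1/2) ^ m) powr s0 < e"
    unfolding eventually_sequentially by blast
  show ?thesis
    by (rule that[of "max M N"]) (use N[of "max M N"] True in simp_all)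
next
  case False
  then have "0 < d"
    using d(1) by simp
  then obtain m where m: "M \<le> m" "d \<le> (1/2) ^ m" "(1/2) ^ Suc m < d"
    using d(2) by (rule exists_dyadic_scale)
  have "((1/2) ^ m) powr s0 \<le> ((1/2) ^ m) powr s"
    using s by (intro powr_mono') (simp_all add: power_le_one)
  also have "\<dots> = (2 * (1/2) ^ Suc m) powr s"
    by simp
  also have "\<dots> = 2 powr s * ((1/2) ^ Suc m) powr s"
    using powr_mult[of 2 "(1/2) ^ Suc m" s] by simp
  also have "\<dots> \<le> 2 powr s * d powr s"
    using m(3) s(1) by (intro mult_left_mono powr_mono2) simp_all
  finally show ?thesis
    using \<open>0 < e\<close> by (intro that[OF m(1,2)]) simp
qed

lemma frostman_set_cover_piece:
  assumes p: "0 \<le> p" "p \<le> 1" and s: "0 \<le> s" "s \<le> s0" "0 < s0"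
    and C: "bounded C" "diameter C \<le> (1/2) ^ M" and "0 < e"
  shows "\<exists>U\<in>sets (bernoulli_seq p). {\<omega> \<in> frostman_set p s0 M. bin_value \<omega> \<in> C} \<subseteq> U \<and>
    emeasure (bernoulli_seq p) U \<le> ennreal (3 * 2 powr s * diameter C powr s + e)"
proof -
  obtain m where m: "M \<le> m" "diameter C \<le> (1/2) ^ m"
    and bound: "((1/2) ^ m) powr s0 \<le> 2 powr s * diameter C powr s + e / 3"
    using exists_dyadic_scale_powr[OF diameter_ge_0[OF C(1)] C(2) s, of "e / 3"] \<open>0 < e\<close> by auto
  have "ennreal (3 * ((1/2) ^ m) powr s0) \<le> ennreal (3 * 2 powr s * diameter C powr s + e)"
    using bound by (intro ennreal_leI) simp
  then show ?thesis
    using frostman_set_small_cover[OF p m(1) C(1) m(2), of s0] by (meson order_trans)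
qed

text \<open>The mass distribution principle for the Bernoulli measure restricted to the Frostman set.\<close>

lemma emeasure_frostman_set_le_cover_sum:
  assumes p: "0 < p" "p < 1" and s: "0 \<le> s" "s \<le> s0" "0 < s0"
    and C: "delta_cover ((1/2) ^ M) (Elevel (1 / p)) C"
  shows "emeasure (bernoulli_seq p) (frostman_set p s0 M) \<le> ennreal (3 * 2 powr s) * cover_sum s C"
proof (rule ennreal_le_epsilon)
  fix e :: real
  assume "0 < e"
  have "\<exists>U\<in>sets (bernoulli_seq p). {\<omega> \<in> frostman_set p s0 M. bin_value \<omega> \<in> C i} \<subseteq> U \<and>
      emeasure (bernoulli_seq p) U
      \<le> ennreal (3 * 2 powr s * diameter (C i) powr s + e * (1/2) ^ Suc i)"
    for i
  proof (rule frostman_set_cover_piece[OF less_imp_le[OF p(1)] less_imp_le[OF p(2)] s])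
    show "bounded (C i)" "diameter (C i) \<le> (1/2) ^ M"
      using C unfolding delta_cover_def by auto
    show "0 < e * (1/2) ^ Suc i"
      using \<open>0 < e\<close> by simp
  qed
  then have "\<forall>i. \<exists>U. U \<in> sets (bernoulli_seq p) \<and> {\<omega> \<in> frostman_set p s0 M. bin_value \<omega> \<in> C i} \<subseteq> U \<and>
      emeasure (bernoulli_seq p) U
      \<le> ennreal (3 * 2 powr s * diameter (C i) powr s + e * (1/2) ^ Suc i)"
    by blast
  from choice[OF this] obtain U where U: "\<forall>i. U i \<in> sets (bernoulli_seq p) \<and>
      {\<omega> \<in> frostman_set p s0 M. bin_value \<omega> \<in> C i} \<subseteq> U i \<and>
      emeasure (bernoulli_seq p) (U i)
      \<le> ennreal (3 * 2 powr s * diameter (C i) powr s + e * (1/2) ^ Suc i)"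
    by blast
  then have U_sets: "\<And>i. U i \<in> sets (bernoulli_seq p)"
    and U_cover: "\<And>i. {\<omega> \<in> frostman_set p s0 M. bin_value \<omega> \<in> C i} \<subseteq> U i"
    and U_measure: "\<And>i. emeasure (bernoulli_seq p) (U i)
      \<le> ennreal (3 * 2 powr s * diameter (C i) powr s + e * (1/2) ^ Suc i)"
    by blast+
  have "AE \<omega> in bernoulli_seq p. \<omega> \<in> frostman_set p s0 M \<longrightarrow> \<omega> \<in> (\<Union>i. U i)"
    using AE_frequency_bernoulli_seq[OF less_imp_le[OF p(1)] less_imp_le[OF p(2)]]
  proof eventually_elim
    case (elim \<omega>)
    then have "bin_value \<omega> \<in> Elevel (1 / p)"
      by (rule bin_value_in_Elevel[OF p(1)])
    then obtain i where "bin_value \<omega> \<in> C i"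
      using C unfolding delta_cover_def by blast
    then show ?case
      using U_cover[of i] by blast
  qed
  then have "emeasure (bernoulli_seq p) (frostman_set p s0 M)
      \<le> emeasure (bernoulli_seq p) (\<Union>i. U i)"
    using U_sets by (intro emeasure_mono_AE) auto
  also have "\<dots> \<le> (\<Sum>i. emeasure (bernoulli_seq p) (U i))"
    using U_sets by (intro emeasure_subadditive_countably) auto
  also have "\<dots> \<le> (\<Sum>i. ennreal (3 * 2 powr s * diameter (C i) powr s + e * (1/2) ^ Suc i))"
    by (intro suminf_le U_measure summableI)
  also have "\<dots> = (\<Sum>i. ennreal (3 * 2 powr s) * ennreal (diameter (C i) powr s)
      + ennreal (e * (1/2) ^ Suc i))"
    using \<open>0 < e\<close> by (simp add: ennreal_plus ennreal_mult mult.assoc)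
  also have "\<dots> = (\<Sum>i. ennreal (3 * 2 powr s) * ennreal (diameter (C i) powr s))
      + (\<Sum>i. ennreal (e * (1/2) ^ Suc i))"
    by (rule suminf_add[symmetric]) (rule summableI)+
  also have "\<dots> = ennreal (3 * 2 powr s) * cover_sum s C + ennreal e"
    unfolding cover_sum_def ennreal_suminf_cmult
      suminf_ennreal_half_series[OF less_imp_le[OF \<open>0 < e\<close>]] ..
  finally show "emeasure (bernoulli_seq p) (frostman_set p s0 M)
      \<le> ennreal (3 * 2 powr s) * cover_sum s C + ennreal e" .
qed

lemma hausdorff_measure_Elevel_nonzero:
  assumes p: "0 < p" "p < 1" and s: "0 \<le> s" "s * ln 2 < cross_entropy p p"
  shows "hausdorff_measure s (Elevel (1 / p)) \<noteq> 0"
proof -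
  interpret prob_space "bernoulli_seq p"
    by (rule prob_space_bernoulli_seq)
  define h where "h = cross_entropy p p / ln 2"
  define s0 where "s0 = (s + h) / 2"
  have "s < h"
    using s(2) unfolding h_def by (simp add: less_divide_eq)
  then have s0: "s \<le> s0" "0 < s0" "s0 < h"
    using s(1) unfolding s0_def by simp_all
  then have "s0 * ln 2 < cross_entropy p p"
    unfolding h_def by (simp add: less_divide_eq)
  obtain M where M: "0 < measure (bernoulli_seq p) (frostman_set p s0 M)"
    using frostman_set_pos[OF p \<open>s0 * ln 2 < cross_entropy p p\<close>] by blast
  define \<mu> where "\<mu> = measure (bernoulli_seq p) (frostman_set p s0 M)"
  show ?thesis
  proof (rule hausdorff_measure_nonzeroI[of "(1/2) ^ M" "ennreal (\<mu> / (3 * 2 powr s))"])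
    fix C
    assume "delta_cover ((1/2) ^ M) (Elevel (1 / p)) C"
    then have "ennreal \<mu> \<le> ennreal (3 * 2 powr s) * cover_sum s C"
      using emeasure_frostman_set_le_cover_sum[OF p s(1) s0(1,2)]
      unfolding \<mu>_def emeasure_eq_measure by simp
    moreover have "ennreal \<mu> = ennreal (3 * 2 powr s) * ennreal (\<mu> / (3 * 2 powr s))"
      using M unfolding \<mu>_def by (simp add: ennreal_mult[symmetric])
    ultimately show "ennreal (\<mu> / (3 * 2 powr s)) \<le> cover_sum s C"
      by (simp add: ennreal_mult_le_mult_iff)
  qed (use M in \<open>simp_all add: \<mu>_def\<close>)
qed

definition tdim_formula :: "real \<Rightarrow> real" where
  "tdim_formula \<xi> = (ln (\<xi> - 1) / \<xi> + ln \<xi> - ln (\<xi> - 1)) / ln 2"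

lemma cross_entropy_inverse:
  assumes "1 < \<xi>"
  shows "cross_entropy (1 / \<xi>) (1 / \<xi>) = tdim_formula \<xi> * ln 2"
proof -
  have "1 - 1 / \<xi> = (\<xi> - 1) / \<xi>"
    using assms by (simp add: field_simps)
  then have "cross_entropy (1 / \<xi>) (1 / \<xi>) = ln \<xi> / \<xi> - ((\<xi> - 1) / \<xi>) * (ln (\<xi> - 1) - ln \<xi>)"
    using assms unfolding cross_entropy_def by (simp add: ln_div)
  also have "\<dots> = tdim_formula \<xi> * ln 2"
    using assms unfolding tdim_formula_def by (simp add: field_simps)
  finally show ?thesis .
qed

lemma cross_entropy_nonneg:
  assumes "0 < p" "p < 1"
  shows "0 \<le> cross_entropy p p"
proof -
  have "p * ln p \<le> 0" "(1 - p) * ln (1 - p) \<le> 0"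
    using assms by (simp_all add: mult_nonneg_nonpos)
  then show ?thesis
    unfolding cross_entropy_def by simp
qed

lemma tdim_eq_formula:
  assumes "1 < \<xi>"
  shows "tdim \<xi> = tdim_formula \<xi>"
  unfolding tdim_def
proof (rule hausdorff_dim_eqI)
  define p where "p = 1 / \<xi>"
  have p: "0 < p" "p < 1" "\<xi> = 1 / p"
    unfolding p_def using assms by auto
  have entropy: "cross_entropy p p = tdim_formula \<xi> * ln 2"
    unfolding p_def by (rule cross_entropy_inverse[OF assms])
  show "0 \<le> tdim_formula \<xi>"
    using cross_entropy_nonneg[OF p(1,2)] entropy by (simp add: zero_le_mult_iff)
  show "hausdorff_measure s (Elevel \<xi>) = 0" if "tdim_formula \<xi> < s" for s
  proof (rule hausdorff_measure_eq_0_if_null)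
    have "cross_entropy (1 / \<xi>) p < s * ln 2"
      using entropy that unfolding p_def by simp
    then show "hausdorff_null s (Elevel \<xi>)"
      using assms p by (intro hausdorff_null_Elevel) simp_all
  qed
  show "hausdorff_measure s (Elevel \<xi>) \<noteq> 0" if "0 \<le> s" "s < tdim_formula \<xi>" for s
    using hausdorff_measure_Elevel_nonzero[OF p(1,2) that(1)] that(2) entropy p(3) by simp
qed

text \<open>For \<open>\<xi> = 1\<close> the ones have frequency \<open>1\<close>, so the cross entropy with weight \<open>q\<close> is \<open>- ln q\<close>,
  which is arbitrarily small.\<close>

lemma hausdorff_dim_Elevel_1: "hausdorff_dim (Elevel 1) = 0"
proof (rule hausdorff_dim_eqI)
  fix s :: real
  assume "0 < s"
  define q where "q = exp (- s * ln 2 / 2)"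
  have "0 < q" "q < 1" "cross_entropy (1 / 1) q < s * ln 2"
    unfolding q_def cross_entropy_def using \<open>0 < s\<close> by simp_all
  then show "hausdorff_measure s (Elevel 1) = 0"
    by (intro hausdorff_measure_eq_0_if_null hausdorff_null_Elevel) simp_all
qed simp_all

section \<open>Shape of the dimension function\<close>

definition tdim_formula' :: "real \<Rightarrow> real" where
  "tdim_formula' \<xi> = - ln (\<xi> - 1) / (\<xi>\<^sup>2 * ln 2)"

definition tdim_formula'' :: "real \<Rightarrow> real" where
  "tdim_formula'' \<xi> = (2 * ln (\<xi> - 1) - \<xi> / (\<xi> - 1)) / (\<xi> ^ 3 * ln 2)"

lemma has_real_derivative_tdim_formula:
  assumes "1 < \<xi>"
  shows "(tdim_formula has_real_derivative tdim_formula' \<xi>) (at \<xi>)"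
proof -
  have "(tdim_formula has_real_derivative
      ((1 / (\<xi> - 1) * \<xi> - ln (\<xi> - 1) * 1) / \<xi>\<^sup>2 + 1 / \<xi> - 1 / (\<xi> - 1)) / ln 2) (at \<xi>)"
    unfolding tdim_formula_def using assms
    by (auto intro!: derivative_eq_intros simp: power2_eq_square)
  moreover have "1 / (\<xi> - 1) * \<xi> / \<xi>\<^sup>2 + 1 / \<xi> - 1 / (\<xi> - 1) = 0"
    using assms by (simp add: field_simps power2_eq_square)
  then have "(1 / (\<xi> - 1) * \<xi> - ln (\<xi> - 1) * 1) / \<xi>\<^sup>2 + 1 / \<xi> - 1 / (\<xi> - 1) = - ln (\<xi> - 1) / \<xi>\<^sup>2"
    by (simp add: diff_divide_distrib)
  ultimately show ?thesis
    unfolding tdim_formula'_def by simp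
qed

lemma has_real_derivative_tdim_formula':
  assumes "1 < \<xi>"
  shows "(tdim_formula' has_real_derivative tdim_formula'' \<xi>) (at \<xi>)"
proof -
  define L where "L = ln (\<xi> - 1)"
  define a where "a = \<xi> / (\<xi> - 1)"
  have "(tdim_formula' has_real_derivative - ((\<xi> * \<xi> * ln 2 / (\<xi> - 1) - ln (\<xi> - 1) * (2 * \<xi> * ln 2))
      / (\<xi> * \<xi> * ln 2 * (\<xi> * \<xi> * ln 2)))) (at \<xi>)"
    unfolding tdim_formula'_def using assms
    by (auto intro!: derivative_eq_intros simp: power2_eq_square)
  moreover have "\<xi> * \<xi> * ln 2 / (\<xi> - 1) - ln (\<xi> - 1) * (2 * \<xi> * ln 2) = (\<xi> * ln 2) * (a - 2 * L)"
    unfolding a_def L_def by (simp add: algebra_simps)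
  moreover have "\<xi> * \<xi> * ln 2 * (\<xi> * \<xi> * ln 2) = (\<xi> * ln 2) * (\<xi> ^ 3 * ln 2)"
    by (simp add: power3_eq_cube algebra_simps)
  moreover have "\<xi> * ln 2 \<noteq> 0"
    using assms by simp
  ultimately show ?thesis
    unfolding tdim_formula''_def a_def L_def by (simp add: minus_divide_left)
qed

lemma continuous_on_tdim_formula': "1 < a \<Longrightarrow> continuous_on {a..b} tdim_formula'"
  unfolding tdim_formula'_def by (intro continuous_intros) auto

lemma has_real_derivative_tdim:
  assumes "1 < \<xi>"
  shows "(tdim has_real_derivative tdim_formula' \<xi>) (at \<xi>)"
proof (rule has_field_derivative_transform_within_open)
  show "(tdim_formula has_real_derivative tdim_formula' \<xi>) (at \<xi>)"
    by (rule has_real_derivative_tdim_formula[OF assms])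
  show "tdim_formula x = tdim x" if "x \<in> {1<..}" for x
    using that by (simp add: tdim_eq_formula)
qed (use assms in simp_all)

lemma deriv_tdim: "1 < \<xi> \<Longrightarrow> deriv tdim \<xi> = tdim_formula' \<xi>"
  by (rule DERIV_imp_deriv[OF has_real_derivative_tdim])

lemma eventually_tdim_eq_formula:
  "eventually (\<lambda>\<xi>. 1 < \<xi>) F \<Longrightarrow> eventually (\<lambda>\<xi>. tdim_formula \<xi> = tdim \<xi>) F"
  by (erule eventually_mono) (simp add: tdim_eq_formula)

lemma eventually_deriv_tdim_eq_formula':
  "eventually (\<lambda>\<xi>. 1 < \<xi>) F \<Longrightarrow> eventually (\<lambda>\<xi>. tdim_formula' \<xi> = deriv tdim \<xi>) F"
  by (erule eventually_mono) (simp add: deriv_tdim)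

lemma tdim_tendsto_at_right_1: "(tdim \<longlongrightarrow> 0) (at_right 1)"
proof -
  have "(tdim_formula \<longlongrightarrow> 0) (at_right 1)"
    unfolding tdim_formula_def by real_asymp
  then show ?thesis
    using tendsto_cong[OF eventually_tdim_eq_formula[OF eventually_at_right_less]] by blast
qed

lemma tdim_tendsto_at_top: "(tdim \<longlongrightarrow> 0) at_top"
proof -
  have "(tdim_formula \<longlongrightarrow> 0) at_top"
    unfolding tdim_formula_def by real_asymp
  then show ?thesis
    using tendsto_cong[OF eventually_tdim_eq_formula[OF eventually_gt_at_top]] by blast
qed

lemma deriv_tdim_filterlim_at_right_1: "filterlim (deriv tdim) at_top (at_right 1)"
proof -
  have "filterlim tdim_formula' at_top (at_right 1)"
    unfolding tdim_formula'_def by real_asymp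
  then show ?thesis
    using filterlim_cong[OF refl refl eventually_deriv_tdim_eq_formula'
      [OF eventually_at_right_less]]
    by blast
qed

lemma deriv_tdim_tendsto_at_top: "(deriv tdim \<longlongrightarrow> 0) at_top"
proof -
  have "(tdim_formula' \<longlongrightarrow> 0) at_top"
    unfolding tdim_formula'_def by real_asymp
  then show ?thesis
    using tendsto_cong[OF eventually_deriv_tdim_eq_formula'[OF eventually_gt_at_top]] by blast
qed

lemma tdim_formula'_pos: "1 < \<xi> \<Longrightarrow> \<xi> < 2 \<Longrightarrow> 0 < tdim_formula' \<xi>"
  unfolding tdim_formula'_def by (simp add: divide_neg_pos)

lemma tdim_formula'_neg: "2 < \<xi> \<Longrightarrow> tdim_formula' \<xi> < 0"
  unfolding tdim_formula'_def by (simp add: divide_neg_pos)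

lemma tdim_formula''_sign:
  obtains c where "1 < c" "\<And>x. 1 < x \<Longrightarrow> x < c \<Longrightarrow> tdim_formula'' x < 0"
    "\<And>x. c < x \<Longrightarrow> 0 < tdim_formula'' x"
proof -
  define g where "g x = 2 * ln (x - 1) - x / (x - 1)" for x :: real
  have g_less: "g x < g y" if "1 < x" "x < y" for x y
  proof -
    have "ln (x - 1) < ln (y - 1)"
      using that by simp
    moreover have "y / (y - 1) < x / (x - 1)"
      using that by (simp add: field_simps)
    ultimately show ?thesis
      unfolding g_def by simp
  qed
  have "1 \<le> exp (2::real)"
    by simp
  then have "1 \<le> 3 * exp (2::real)"
    by linarith
  with \<open>1 \<le> exp (2::real)\<close> have "g 2 \<le> 0" "0 \<le> g (1 + exp 2)" "2 \<le> 1 + exp (2::real)"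
    unfolding g_def by (simp_all add: divide_le_eq)
  moreover have "continuous_on {2..1 + exp 2} g"
    unfolding g_def by (intro continuous_intros) auto
  ultimately obtain c where "2 \<le> c" "g c = 0"
    using IVT'[of g 2 0 "1 + exp 2"] by auto
  have "tdim_formula'' x = g x / (x ^ 3 * ln 2)" for x
    unfolding tdim_formula''_def g_def ..
  show ?thesis
  proof (rule that)
    show "1 < c"
      using \<open>2 \<le> c\<close> by simp
    show "tdim_formula'' x < 0" if "1 < x" "x < c" for x
      using g_less[OF that] \<open>g c = 0\<close> \<open>1 < x\<close>
      unfolding \<open>tdim_formula'' x = g x / (x ^ 3 * ln 2)\<close> by (simp add: divide_neg_pos)
    show "0 < tdim_formula'' x" if "c < x" for x
      using g_less[OF _ that] \<open>g c = 0\<close> \<open>2 \<le> c\<close> that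
      unfolding \<open>tdim_formula'' x = g x / (x ^ 3 * ln 2)\<close> by simp
  qed
qed

lemma strict_convex_chord_if_deriv_increasing:
  fixes f f' :: "real \<Rightarrow> real"
  assumes deriv: "\<And>x. x \<in> {a..b} \<Longrightarrow> (f has_real_derivative f' x) (at x)"
    and mono: "\<And>x y. x \<in> {a..b} \<Longrightarrow> y \<in> {a..b} \<Longrightarrow> x < y \<Longrightarrow> f' x < f' y"
    and xy: "x \<in> {a..b}" "y \<in> {a..b}" "x < y" and u: "0 < u" "u < 1"
  shows "f ((1 - u) * x + u * y) < (1 - u) * f x + u * f y"
proof -
  have der: "(f has_real_derivative f' t) (at t)" if "x \<le> t" "t \<le> y" for t
    using deriv[of t] xy that by auto
  define z where "z = (1 - u) * x + u * y"
  have zx: "z - x = u * (y - x)" and yz: "y - z = (1 - u) * (y - x)"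
    unfolding z_def by (simp_all add: algebra_simps)
  have "0 < u * (y - x)" "0 < (1 - u) * (y - x)"
    using xy u by simp_all
  then have "0 < z - x" "0 < y - z"
    unfolding zx yz .
  then have "x < z" "z < y"
    by simp_all
  obtain \<alpha> where \<alpha>: "x < \<alpha>" "\<alpha> < z" "f z - f x = (z - x) * f' \<alpha>"
    using MVT2[OF \<open>x < z\<close>, of f f'] der \<open>z < y\<close> by force
  obtain \<beta> where \<beta>: "z < \<beta>" "\<beta> < y" "f y - f z = (y - z) * f' \<beta>"
    using MVT2[OF \<open>z < y\<close>, of f f'] der \<open>x < z\<close> by force
  have "f' \<alpha> < f' \<beta>"
    using \<alpha> \<beta> xy by (intro mono) auto
  have fx: "f x = f z - (z - x) * f' \<alpha>" and fy: "f y = f z + (y - z) * f' \<beta>"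
    using \<alpha>(3) \<beta>(3) by simp_all
  have "(1 - u) * f x + u * f y - f z = (1 - u) * (- ((z - x) * f' \<alpha>)) + u * ((y - z) * f' \<beta>)"
    unfolding fx fy by (simp add: algebra_simps)
  also have "\<dots> = u * (1 - u) * (y - x) * (f' \<beta> - f' \<alpha>)"
    by (simp add: zx yz algebra_simps)
  finally have gap: "(1 - u) * f x + u * f y - f z = u * (1 - u) * (y - x) * (f' \<beta> - f' \<alpha>)" .
  have "0 < u * (1 - u) * (y - x) * (f' \<beta> - f' \<alpha>)"
    using xy u \<open>f' \<alpha> < f' \<beta>\<close> by simp
  with gap show ?thesis
    unfolding z_def[symmetric] by linarith
qed

lemma strict_convex_on_real_if_deriv_increasing:
  fixes f f' :: "real \<Rightarrow> real"
  assumes deriv: "\<And>x. x \<in> {a..b} \<Longrightarrow> (f has_real_derivative f' x) (at x)"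
    and mono: "\<And>x y. x \<in> {a..b} \<Longrightarrow> y \<in> {a..b} \<Longrightarrow> x < y \<Longrightarrow> f' x < f' y"
  shows "strict_convex_on_real {a..b} f"
  unfolding strict_convex_on_real_def
proof (intro ballI allI impI)
  fix x y u :: real
  assume x: "x \<in> {a..b}" and y: "y \<in> {a..b}" and xyu: "x \<noteq> y \<and> 0 < u \<and> u < 1"
  then consider "x < y" | "y < x"
    by linarith
  then show "f ((1 - u) * x + u * y) < (1 - u) * f x + u * f y"
  proof cases
    case 1
    then show ?thesis
      using strict_convex_chord_if_deriv_increasing[OF deriv mono x y] xyu by blast
  next
    case 2
    then have "f ((1 - (1 - u)) * y + (1 - u) * x) < (1 - (1 - u)) * f y + (1 - u) * f x"
      using strict_convex_chord_if_deriv_increasing[OF deriv mono y x, of "1 - u"] xyu by simp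
    then show ?thesis
      by (simp add: algebra_simps)
  qed
qed

lemma strict_concave_on_real_if_deriv_decreasing:
  fixes f f' :: "real \<Rightarrow> real"
  assumes "\<And>x. x \<in> {a..b} \<Longrightarrow> (f has_real_derivative f' x) (at x)"
    and "\<And>x y. x \<in> {a..b} \<Longrightarrow> y \<in> {a..b} \<Longrightarrow> x < y \<Longrightarrow> f' y < f' x"
  shows "strict_concave_on_real {a..b} f"
  unfolding strict_concave_on_real_def
  by (rule strict_convex_on_real_if_deriv_increasing[where f' = "\<lambda>x. - f' x"])
     (use assms in \<open>auto intro: DERIV_minus\<close>)

lemma strict_convex_on_real_subset:
  "strict_convex_on_real B f \<Longrightarrow> A \<subseteq> B \<Longrightarrow> strict_convex_on_real A f"
  unfolding strict_convex_on_real_def by blast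

lemma strict_convex_concave_on_real_interval_False:
  assumes "a < b" "strict_convex_on_real {a..b} f" "strict_concave_on_real {a..b} f"
  shows False
proof -
  have ab: "a \<in> {a..b}" "b \<in> {a..b}" "a \<noteq> b \<and> 0 < (1/2::real) \<and> (1/2::real) < 1"
    using assms(1) by auto
  have "f ((1 - 1/2) * a + 1/2 * b) < (1 - 1/2) * f a + 1/2 * f b"
    using assms(2) ab unfolding strict_convex_on_real_def by blast
  moreover have "- f ((1 - 1/2) * a + 1/2 * b) < (1 - 1/2) * (- f a) + 1/2 * (- f b)"
    using assms(3) ab unfolding strict_concave_on_real_def strict_convex_on_real_def by blast
  ultimately show False
    by linarith
qed

lemma inflection_point_uminus: "inflection_point (\<lambda>x. - f x) c \<longleftrightarrow> inflection_point f c"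
  unfolding inflection_point_def strict_concave_on_real_def by auto

lemma not_inflection_point_if_strict_convex:
  assumes "a < c" "c < b" and convex: "strict_convex_on_real {a..b} f"
  shows "\<not> inflection_point f c"
proof
  assume "inflection_point f c"
  then obtain e where "0 < e"
    and concave: "strict_concave_on_real {c..c + e} f \<or> strict_concave_on_real {c - e..c} f"
    unfolding inflection_point_def by blast
  from concave show False
  proof
    assume "strict_concave_on_real {c..c + e} f"
    then have concave: "strict_concave_on_real {c..min (c + e) b} f"
      unfolding strict_concave_on_real_def by (rule strict_convex_on_real_subset) auto
    have convex': "strict_convex_on_real {c..min (c + e) b} f"
      by (rule strict_convex_on_real_subset[OF convex]) (use assms in auto)
    show False
      by (rule strict_convex_concave_on_real_interval_False[OF _ convex' concave])
        (use assms \<open>0 < e\<close> in auto)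
  next
    assume "strict_concave_on_real {c - e..c} f"
    then have concave: "strict_concave_on_real {max (c - e) a..c} f"
      unfolding strict_concave_on_real_def by (rule strict_convex_on_real_subset) auto
    have convex': "strict_convex_on_real {max (c - e) a..c} f"
      by (rule strict_convex_on_real_subset[OF convex]) (use assms in auto)
    show False
      by (rule strict_convex_concave_on_real_interval_False[OF _ convex' concave])
        (use assms \<open>0 < e\<close> in auto)
  qed
qed

lemma not_inflection_point_if_strict_concave:
  assumes "a < c" "c < b" and "strict_concave_on_real {a..b} f"
  shows "\<not> inflection_point f c"
  using not_inflection_point_if_strict_convex[of a c b "\<lambda>x. - f x"] assms
  unfolding inflection_point_uminus strict_concave_on_real_def by simp

context
  fixes c :: real
  assumes c: "1 < c" "\<And>x. 1 < x \<Longrightarrow> x < c \<Longrightarrow> tdim_formula'' x < 0"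
    "\<And>x. c < x \<Longrightarrow> 0 < tdim_formula'' x"
begin

lemma strict_concave_tdim:
  assumes "1 < a" "b \<le> c"
  shows "strict_concave_on_real {a..b} tdim"
proof (rule strict_concave_on_real_if_deriv_decreasing)
  show "(tdim has_real_derivative tdim_formula' x) (at x)" if "x \<in> {a..b}" for x
    using that assms by (intro has_real_derivative_tdim) auto
  show "tdim_formula' y < tdim_formula' x" if "x \<in> {a..b}" "y \<in> {a..b}" "x < y" for x y
  proof (rule DERIV_neg_imp_decreasing_open[OF \<open>x < y\<close>])
    fix t
    assume "x < t" "t < y"
    then have "1 < t" "t < c"
      using that assms by auto
    then show "\<exists>D. (tdim_formula' has_real_derivative D) (at t) \<and> D < 0"
      using c(2) has_real_derivative_tdim_formula' by blast
  next
    show "continuous_on {x..y} tdim_formula'"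
      using that assms by (intro continuous_on_tdim_formula') auto
  qed
qed

lemma strict_convex_tdim:
  assumes "c \<le> a"
  shows "strict_convex_on_real {a..b} tdim"
proof (rule strict_convex_on_real_if_deriv_increasing)
  show "(tdim has_real_derivative tdim_formula' x) (at x)" if "x \<in> {a..b}" for x
    using that assms c(1) by (intro has_real_derivative_tdim) auto
  show "tdim_formula' x < tdim_formula' y" if "x \<in> {a..b}" "y \<in> {a..b}" "x < y" for x y
  proof (rule DERIV_pos_imp_increasing_open[OF \<open>x < y\<close>])
    fix t
    assume "x < t" "t < y"
    then have "1 < t" "c < t"
      using that assms c(1) by auto
    then show "\<exists>D. (tdim_formula' has_real_derivative D) (at t) \<and> 0 < D"
      using c(3) has_real_derivative_tdim_formula' by blast
  next
    show "continuous_on {x..y} tdim_formula'"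
      using that assms c(1) by (intro continuous_on_tdim_formula') auto
  qed
qed

lemma inflection_point_tdim_iff:
  assumes "1 < x"
  shows "inflection_point tdim x \<longleftrightarrow> x = c"
proof -
  have "inflection_point tdim c"
    unfolding inflection_point_def
  proof (intro exI[of _ "(c - 1) / 2"] conjI disjI2)
    show "strict_concave_on_real {c - (c - 1) / 2..c} tdim"
      using c(1) by (intro strict_concave_tdim) (simp_all add: field_simps)
    show "strict_convex_on_real {c..c + (c - 1) / 2} tdim"
      by (rule strict_convex_tdim) simp
  qed (use c(1) in simp)
  moreover have "x = c" if infl: "inflection_point tdim x"
  proof (cases x c rule: linorder_cases)
    case less
    then have "strict_concave_on_real {(1 + x) / 2..c} tdim"
      using assms by (intro strict_concave_tdim) simp_all
    then show ?thesis
      using not_inflection_point_if_strict_concave[of "(1 + x) / 2" x c] infl less assms by simp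
  next
    case greater
    then have "strict_convex_on_real {c..x + 1} tdim"
      by (intro strict_convex_tdim) simp
    then show ?thesis
      using not_inflection_point_if_strict_convex[of c x "x + 1"] infl greater by simp
  qed
  ultimately show ?thesis
    by blast
qed

end

lemma ex1_inflection_point_tdim: "\<exists>!c. c \<in> {1<..} \<and> inflection_point tdim c"
proof -
  obtain c where c: "1 < c" "\<And>x. 1 < x \<Longrightarrow> x < c \<Longrightarrow> tdim_formula'' x < 0"
    "\<And>x. c < x \<Longrightarrow> 0 < tdim_formula'' x"
    using tdim_formula''_sign by metis
  show ?thesis
    using inflection_point_tdim_iff[OF c] c(1) by (metis greaterThan_iff)
qed

theorem theorem1p1:
  shows "hausdorff_dim (Elevel 1) = 0
    \<and> (\<forall>\<xi>>1. tdim \<xi> = (ln (\<xi> - 1) / \<xi> + ln \<xi> - ln (\<xi> - 1)) / ln 2)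
    \<and> tdim 2 = 1
    \<and> (tdim \<longlongrightarrow> 0) (at_right 1) \<and> (tdim \<longlongrightarrow> 0) at_top
    \<and> (\<forall>\<xi>\<in>{1<..<2}. \<exists>D. (tdim has_real_derivative D) (at \<xi>) \<and> D > 0)
    \<and> (tdim has_real_derivative 0) (at 2)
    \<and> (\<forall>\<xi>>2. \<exists>D. (tdim has_real_derivative D) (at \<xi>) \<and> D < 0)
    \<and> filterlim (deriv tdim) at_top (at_right 1)
    \<and> (deriv tdim \<longlongrightarrow> 0) at_top
    \<and> (\<exists>!c. c \<in> {1<..} \<and> inflection_point tdim c)"
proof -
  have formula: "\<forall>\<xi>>1. tdim \<xi> = (ln (\<xi> - 1) / \<xi> + ln \<xi> - ln (\<xi> - 1)) / ln 2"
    using tdim_eq_formula unfolding tdim_formula_def by simp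
  have "\<forall>\<xi>\<in>{1<..<2}. \<exists>D. (tdim has_real_derivative D) (at \<xi>) \<and> D > 0"
    using has_real_derivative_tdim tdim_formula'_pos by (meson greaterThanLessThan_iff)
  moreover have "(tdim has_real_derivative 0) (at 2)"
    using has_real_derivative_tdim[of 2] by (simp add: tdim_formula'_def)
  moreover have "\<forall>\<xi>>2. \<exists>D. (tdim has_real_derivative D) (at \<xi>) \<and> D < 0"
  proof (intro allI impI)
    fix \<xi> :: real
    assume "2 < \<xi>"
    then show "\<exists>D. (tdim has_real_derivative D) (at \<xi>) \<and> D < 0"
      using has_real_derivative_tdim[of \<xi>] tdim_formula'_neg[of \<xi>] by auto
  qed
  ultimately show ?thesis
    using formula[rule_format, of 2] hausdorff_dim_Elevel_1 tdim_tendsto_at_right_1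
      tdim_tendsto_at_top deriv_tdim_filterlim_at_right_1 deriv_tdim_tendsto_at_top
      ex1_inflection_point_tdim
    by (simp add: formula)
qed

end
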